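(* Let $(X,\rho)$ be a complete separable metric space such that $\rho$ is an ultrametric, i.e. $\rho(x,z)\le\max\{\rho(x,y),\rho(y,z)\}$ for all $x,y,z\in X$. Let $0<p<\infty$ and let $\Phi\colon\mathcal{W}_p(X)\to\mathcal{W}_p(X)$ be an isometry (distance preserving bijection). Then there exists an isometry $\psi$ of $X$ such that $\Phi(\mu)=\psi_\#\mu$ for all $\mu\in\mathcal{W}_p(X)$.
   Context: For $0<p<\infty$, $\mathcal{W}_p(X)$ is the set of Borel probability measures $\mu$ on $X$ with $\int_X\rho(x,\hat x)^p\,d\mu(x)<\infty$ for some $\hat x\in X$, equipped with $d_{\mathcal{W}_p}(\mu,\nu)=\big(\inf_{\pi\in\Pi(\mu,\nu)}\int_{X\times X}\rho(x,y)^p\,d\pi(x,y)\big)^{\min\{1/p,1\}}$, where $\Pi(\mu,\nu)$ is the set of Borel probability measures on $X\times X$ with marginals $\mu,\nu$. The push-forward is $(g_\#\mu)(A)=\mu(g^{-1}[A])$. *)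

theory Defs
  imports "HOL-Probability.Probability"
begin

definition ultrametric :: "('a::metric_space) itself \<Rightarrow> bool" where
  "ultrametric _ \<longleftrightarrow> (\<forall>x y z::'a. dist x z \<le> max (dist x y) (dist y z))"

definition wasserstein_space :: "real \<Rightarrow> ('a::metric_space) measure set" where
  "wasserstein_space p = {\<mu>. sets \<mu> = sets (borel :: 'a measure) \<and> prob_space \<mu> \<and>
      (\<exists>x0::'a. (\<integral>\<^sup>+ x. ennreal (dist x x0 powr p) \<partial>\<mu>) < \<infinity>)}"

definition couplings :: "('a::metric_space) measure \<Rightarrow> 'a measure \<Rightarrow> ('a \<times> 'a) measure set" where
  "couplings \<mu> \<nu> = {\<pi>. sets \<pi> = sets (borel :: ('a \<times> 'a) measure) \<and> prob_space \<pi> \<and>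
      distr \<pi> borel fst = \<mu> \<and> distr \<pi> borel snd = \<nu>}"

text \<open>Wasserstein distance (the infimum is finite on the Wasserstein space).\<close>
definition wasserstein_dist :: "real \<Rightarrow> ('a::metric_space) measure \<Rightarrow> 'a measure \<Rightarrow> real" where
  "wasserstein_dist p \<mu> \<nu> =
     enn2real (INF \<pi>\<in>couplings \<mu> \<nu>. \<integral>\<^sup>+ xy. ennreal (dist (fst xy) (snd xy) powr p) \<partial>\<pi>)
       powr (min (1/p) 1)"

end

theory Submission
  imports Defs
begin

(*
  Write T(mu, nu) for the optimal transport cost inf_pi of the integral of rho^p, so that
  W_p = T^min(1/p, 1) and Phi preserves T.  Dirac masses are characterised by T alone: for a
  Dirac mass at x the ultrametric inequality rho(u, v)^p <= max(rho(u, x)^p, rho(x, v)^p) makes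
  T(nu1, nu2) < T(nu1, delta_x) + T(delta_x, nu2) strictly for all nu1, nu2 other than delta_x,
  whereas a measure mu that is not a Dirac mass charges some closed ball B with mass strictly
  between 0 and 1 and lies between its conditional measures on B and off B:
  T(mu_B, mu) + T(mu, mu_(X-B)) <= T(mu_B, mu_(X-B)).  Hence Phi permutes the Dirac masses,
  Phi(delta_x) = delta_(psi x), and psi is a bijective isometry of X.

  Since T(mu, delta_x) is the potential of mu at x, i.e. the integral of rho(y, x)^p dmu(y), the
  measures Phi(mu) and psi_# mu have the same potential.  In an ultrametric space the kernel
  rho^p is conditionally negative definite: the balls {rho^p <= t} partition X into cells C_n,
  and the layer-cake formula turns 2 E(a, b) - E(a, a) - E(b, b), with E the energy
  E(a, b) = double integral of rho^p da db, into the integral over t > 0 of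
  sum_n (a(C_n) - b(C_n))^2.  Equal potentials make this vanish, so the two measures agree on
  the balls of almost every radius, hence on all balls, which generate the Borel sets.
*)

lemma powr_eq_powr_imp_eq:
  fixes a b q :: real
  assumes "0 \<le> a" and "0 \<le> b" and "0 < q" and "a powr q = b powr q"
  shows "a = b"
  using assms powr_less_mono2[of q a b] powr_less_mono2[of q b a] by (metis linorder_neq_iff less_irrefl)

lemma le_zero_if_le_div_Suc:
  fixes t c :: real
  assumes "\<And>n. t \<le> c / real (Suc n)"
  shows "t \<le> 0"
  by (rule LIMSEQ_le_const[OF LIMSEQ_Suc[OF lim_const_over_n]]) (use assms in auto)

lemma ennreal_less_if_add_pos_le:
  fixes a b c :: ennreal
  assumes le: "a + c \<le> b" and c: "0 < c" and b: "b < \<top>"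
  shows "a < b"
proof -
  have "a < \<top>"
    using le b by (meson add_increasing2 le_less_trans zero_le order_refl)
  then have "a < a + c"
    using ennreal_add_left_cancel_less[of a 0] c by simp
  then show ?thesis
    using le by (rule less_le_trans)
qed

lemma dense_sequenceE:
  obtains d :: "nat \<Rightarrow> 'a::polish_space" where "\<And>z e. 0 < e \<Longrightarrow> \<exists>k. dist z (d k) < e"
proof -
  obtain D :: "'a set" where D: "countable D" "\<And>X. open X \<Longrightarrow> X \<noteq> {} \<Longrightarrow> \<exists>d\<in>D. d \<in> X"
    by (rule countable_dense_setE) blast
  have "\<exists>k. dist z (from_nat_into D k) < e" if "0 < e" for z e
  proof -
    obtain y where "y \<in> D" "y \<in> ball z e"
      using D(2)[of "ball z e"] \<open>0 < e\<close> by auto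
    then show ?thesis
      using from_nat_into_surj[OF D(1)] by (metis mem_ball)
  qed
  then show ?thesis
    using that by blast
qed

lemma return_borel_inject:
  assumes "return borel (a::'a::t1_space) = return borel b"
  shows "a = b"
proof -
  have "emeasure (return borel a) {a} = emeasure (return borel b) {a}"
    using assms by simp
  then show ?thesis
    by (simp split: split_indicator_asm)
qed

lemma emeasure_compl_singleton_pos:
  fixes \<nu> :: "'a::polish_space measure"
  assumes "sets \<nu> = sets borel" and "prob_space \<nu>" and "\<nu> \<noteq> return borel x"
  shows "0 < emeasure \<nu> (- {x})"
proof (rule ccontr)
  assume "\<not> 0 < emeasure \<nu> (- {x})"
  then have "AE y in \<nu>. y = x"
    using assms(1) by (intro AE_I'[of "- {x}"]) (auto simp: null_sets_def zero_less_iff_neq_zero)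
  then have "\<nu> = return borel x"
    using prob_space.AE_eq_constD(1)[OF assms(2)] return_cong[OF assms(1)] by metis
  with assms(3) show False ..
qed

lemma exists_cball_emeasure_pos:
  fixes \<mu> :: "'a::polish_space measure"
  assumes \<mu>: "sets \<mu> = sets borel" "prob_space \<mu>" and e: "0 < e"
  shows "\<exists>c. 0 < emeasure \<mu> (cball c e)"
proof (rule ccontr)
  assume "\<not> ?thesis"
  then have null: "emeasure \<mu> (cball c e) = 0" for c
    using not_gr_zero by blast
  obtain d :: "nat \<Rightarrow> 'a" where d: "\<And>z e. 0 < e \<Longrightarrow> \<exists>k. dist z (d k) < e"
    using dense_sequenceE by blast
  have "z \<in> (\<Union>k. cball (d k) e)" for z
  proof -
    obtain k where "dist z (d k) < e"
      using d[OF e, of z] by auto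
    then have "z \<in> cball (d k) e"
      by (simp add: dist_commute)
    then show ?thesis
      by blast
  qed
  moreover have "space \<mu> = UNIV"
    using sets_eq_imp_space_eq[OF \<mu>(1)] by simp
  ultimately have "space \<mu> = (\<Union>k. cball (d k) e)"
    by blast
  moreover have "range (\<lambda>k. cball (d k) e) \<subseteq> sets \<mu>"
    unfolding \<mu>(1) by (auto intro: borel_closed)
  ultimately have "emeasure \<mu> (space \<mu>) \<le> (\<Sum>k. emeasure \<mu> (cball (d k) e))"
    by (simp add: emeasure_subadditive_countably)
  then show False
    using null prob_space.emeasure_space_1[OF \<mu>(2)] by simp
qed

lemma return_if_emeasure_shrinking_cball_eq_1:
  fixes \<mu> :: "'a::polish_space measure"
  assumes \<mu>: "sets \<mu> = sets borel" "prob_space \<mu>"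
    and c: "\<And>n. emeasure \<mu> (cball (c n) (1 / real (Suc n))) = 1"
  obtains z where "\<mu> = return borel z"
proof -
  interpret prob_space \<mu> by (rule \<mu>(2))
  have "AE y in \<mu>. y \<in> cball (c n) (1 / real (Suc n))" for n
    using c \<mu>(1) by (subst AE_prob_1) (auto simp: emeasure_eq_measure sets_eq_imp_space_eq[OF \<mu>(1)])
  then have in_all: "AE y in \<mu>. \<forall>n. y \<in> cball (c n) (1 / real (Suc n))"
    by (simp add: AE_all_countable)
  have "\<exists>z. \<forall>n. z \<in> cball (c n) (1 / real (Suc n))"
  proof (rule ccontr)
    assume none: "\<not> ?thesis"
    have "AE y in \<mu>. False"
      using in_all by (rule AE_mp, intro AE_I2) (use none in blast)
    then show False
      by simp
  qed
  then obtain z where z: "\<forall>n. z \<in> cball (c n) (1 / real (Suc n))"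
    by blast
  have "AE y in \<mu>. y = z"
    using in_all
  proof (rule AE_mp, intro AE_I2 impI)
    fix y assume y: "\<forall>n. y \<in> cball (c n) (1 / real (Suc n))"
    have "dist y z \<le> 2 / real (Suc n)" for n
    proof -
      have "dist (c n) y \<le> 1 / real (Suc n)" and "dist (c n) z \<le> 1 / real (Suc n)"
        using y z by auto
      then have "dist y z \<le> 1 / real (Suc n) + 1 / real (Suc n)"
        using dist_triangle3[of y z "c n"] by linarith
      then show ?thesis
        by (simp add: add_divide_distrib[symmetric])
    qed
    then show "y = z"
      using le_zero_if_le_div_Suc[of "dist y z" 2] by simp
  qed
  then have "\<mu> = return borel z"
    using AE_eq_constD(1) return_cong[OF \<mu>(1)] by metis
  then show thesis
    by (rule that)
qed

lemma cball_measure_strictly_between: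
  fixes \<mu> :: "'a::polish_space measure"
  assumes \<mu>: "sets \<mu> = sets borel" "prob_space \<mu>" and not_return: "\<And>x. \<mu> \<noteq> return borel x"
  obtains x r where "0 < emeasure \<mu> (cball x r)" and "emeasure \<mu> (cball x r) < 1"
proof (rule ccontr)
  assume "\<not> thesis"
  then have zero_one: "emeasure \<mu> (cball x r) = 0 \<or> emeasure \<mu> (cball x r) = 1" for x r
    using that prob_space.emeasure_le_1[OF \<mu>(2)] by (metis not_gr_zero order_less_le)
  have "\<exists>c. emeasure \<mu> (cball c (1 / real (Suc n))) = 1" for n
  proof -
    obtain c where "0 < emeasure \<mu> (cball c (1 / real (Suc n)))"
      using exists_cball_emeasure_pos[OF \<mu>, of "1 / real (Suc n)"] by auto
    then show ?thesis
      using zero_one[of c "1 / real (Suc n)"] by auto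
  qed
  then obtain c where "\<And>n. emeasure \<mu> (cball (c n) (1 / real (Suc n))) = 1"
    by metis
  then obtain z where "\<mu> = return borel z"
    by (rule return_if_emeasure_shrinking_cball_eq_1[OF \<mu>])
  with not_return show False
    by blast
qed

lemma distr_pair_snd:
  assumes "prob_space M" and "sigma_finite_measure N"
  shows "distr (M \<Otimes>\<^sub>M N) N snd = N"
proof (intro measure_eqI)
  interpret M: prob_space M by fact
  interpret N: sigma_finite_measure N by fact
  fix A assume A: "A \<in> sets (distr (M \<Otimes>\<^sub>M N) N snd)"
  then have "emeasure (distr (M \<Otimes>\<^sub>M N) N snd) A = emeasure (M \<Otimes>\<^sub>M N) (space M \<times> A)"
    by (auto simp: emeasure_distr space_pair_measure dest: sets.sets_into_space
        intro!: arg_cong2[where f=emeasure])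
  with A show "emeasure (distr (M \<Otimes>\<^sub>M N) N snd) A = emeasure N A"
    by (simp add: N.emeasure_pair_measure_Times M.emeasure_space_1)
qed simp

lemma nn_integral_pair_measure_fst:
  assumes "prob_space N" and "g \<in> borel_measurable M"
  shows "(\<integral>\<^sup>+ w. g (fst w) \<partial>(M \<Otimes>\<^sub>M N)) = (\<integral>\<^sup>+ x. g x \<partial>M)"
proof -
  have "(\<integral>\<^sup>+ w. g (fst w) \<partial>(M \<Otimes>\<^sub>M N)) = (\<integral>\<^sup>+ x. g x \<partial>distr (M \<Otimes>\<^sub>M N) M fst)"
    using assms(2) by (subst nn_integral_distr) auto
  then show ?thesis
    by (simp add: prob_space.distr_pair_fst[OF assms(1)])
qed

lemma nn_integral_pair_measure_snd:
  assumes "prob_space M" and "sigma_finite_measure N" and "g \<in> borel_measurable N"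
  shows "(\<integral>\<^sup>+ w. g (snd w) \<partial>(M \<Otimes>\<^sub>M N)) = (\<integral>\<^sup>+ y. g y \<partial>N)"
proof -
  have "(\<integral>\<^sup>+ w. g (snd w) \<partial>(M \<Otimes>\<^sub>M N)) = (\<integral>\<^sup>+ y. g y \<partial>distr (M \<Otimes>\<^sub>M N) N snd)"
    using assms(3) by (subst nn_integral_distr) auto
  then show ?thesis
    by (simp add: distr_pair_snd[OF assms(1,2)])
qed

lemma nn_integral_pos_if_pos_on:
  assumes "f \<in> borel_measurable M" and "E \<in> sets M" and "0 < emeasure M E"
    and "\<And>w. w \<in> E \<Longrightarrow> 0 < f w"
  shows "0 < (\<integral>\<^sup>+ w. f w \<partial>M)"
proof (rule ccontr)
  assume "\<not> 0 < (\<integral>\<^sup>+ w. f w \<partial>M)"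
  then have "AE w in M. f w = 0"
    using assms(1) by (simp add: nn_integral_0_iff_AE zero_less_iff_neq_zero)
  then have "AE w in M. w \<notin> E"
    by (rule AE_mp) (use assms(4) in fastforce)
  moreover have "{w \<in> space M. \<not> w \<notin> E} = E"
    using sets.sets_into_space[OF assms(2)] by blast
  ultimately have "emeasure M E = 0"
    using AE_iff_measurable[OF assms(2)] by simp
  then show False
    using assms(3) by simp
qed

lemma nn_integral_layer_cake:
  fixes f :: "'b \<Rightarrow> real"
  assumes "sigma_finite_measure Q" and f: "f \<in> borel_measurable Q" and "\<And>w. 0 \<le> f w"
  shows "(\<integral>\<^sup>+ w. ennreal (f w) \<partial>Q) = (\<integral>\<^sup>+ t. emeasure Q {w \<in> space Q. t < f w} * indicator {0<..} t \<partial>lborel)"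
proof -
  interpret Q: sigma_finite_measure Q by fact
  interpret P: pair_sigma_finite lborel Q by unfold_locales
  define G where "G = {x \<in> space (lborel \<Otimes>\<^sub>M Q). 0 < fst x \<and> fst x < f (snd x)}"
  have G: "G \<in> sets (lborel \<Otimes>\<^sub>M Q)"
    unfolding G_def using f by measurable
  have "(\<integral>\<^sup>+ t. indicator G (t, w) \<partial>lborel) = ennreal (f w)" if "w \<in> space Q" for w
  proof -
    have "(\<integral>\<^sup>+ t. indicator G (t, w) \<partial>lborel) = (\<integral>\<^sup>+ t. indicator {0<..<f w} t \<partial>lborel)"
      using that by (intro nn_integral_cong) (auto simp: G_def space_pair_measure split: split_indicator)
    then show ?thesis
      using assms(3)[of w] by simp
  qed
  then have "(\<integral>\<^sup>+ w. ennreal (f w) \<partial>Q) = (\<integral>\<^sup>+ w. \<integral>\<^sup>+ t. indicator G (t, w) \<partial>lborel \<partial>Q)"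
    by (intro nn_integral_cong) simp
  also have "\<dots> = (\<integral>\<^sup>+ t. \<integral>\<^sup>+ w. indicator G (t, w) \<partial>Q \<partial>lborel)"
    using P.Fubini'[of "\<lambda>t w. indicator G (t, w)"] G by simp
  also have "\<dots> = (\<integral>\<^sup>+ t. emeasure Q {w \<in> space Q. t < f w} * indicator {0<..} t \<partial>lborel)"
  proof (intro nn_integral_cong)
    fix t :: real
    have "{w \<in> space Q. t < f w} \<in> sets Q"
      using f by measurable
    moreover have "(\<integral>\<^sup>+ w. indicator G (t, w) \<partial>Q) = (\<integral>\<^sup>+ w. indicator {w \<in> space Q. t < f w} w * indicator {0<..} t \<partial>Q)"
      by (intro nn_integral_cong) (auto simp: G_def space_pair_measure split: split_indicator)
    ultimately show "(\<integral>\<^sup>+ w. indicator G (t, w) \<partial>Q) = emeasure Q {w \<in> space Q. t < f w} * indicator {0<..} t"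
      by (simp add: nn_integral_multc)
  qed
  finally show ?thesis .
qed

lemma AE_lborel_decseq_from_right:
  fixes r :: real
  assumes "AE t in lborel. P t"
  obtains m where "decseq m" and "\<And>k. r < m k" and "\<And>k. m k < r + 1 / real (Suc k)" and "\<And>k. P (m k)"
proof -
  have "\<exists>t. r < t \<and> t < r + 1 / real (Suc k) \<and> P t" for k
  proof (rule ccontr)
    assume none: "\<not> ?thesis"
    have "AE t in lborel. t \<notin> {r<..<r + 1 / real (Suc k)}"
      using assms by eventually_elim (use none in auto)
    then have "emeasure lborel {r<..<r + 1 / real (Suc k)} = 0"
      by (subst (asm) AE_iff_null_sets[symmetric]) auto
    then show False
      by simp
  qed
  then obtain g where g: "\<And>k. r < g k" "\<And>k. g k < r + 1 / real (Suc k)" "\<And>k. P (g k)"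
    by metis
  define m where "m k = Min (g ` {..k})" for k
  have m_in: "m k \<in> g ` {..k}" for k
    unfolding m_def by (rule Min_in) auto
  have "r < m k" and "P (m k)" for k
    using m_in[of k] g(1,3) by force+
  moreover have "m k \<le> g k" for k
    unfolding m_def by (rule Min_le) auto
  then have "m k < r + 1 / real (Suc k)" for k
    using g(2) order.strict_trans1 by blast
  moreover have "decseq m"
    unfolding decseq_def m_def by (auto intro: Min_antimono)
  ultimately show thesis
    using that by blast
qed

lemma measurable_fst_snd_borel:
  shows "fst \<in> borel_measurable (borel :: ('a::second_countable_topology \<times> 'b::second_countable_topology) measure)"
    and "snd \<in> borel_measurable (borel :: ('a::second_countable_topology \<times> 'b::second_countable_topology) measure)"
  by (metis measurable_fst borel_prod, metis measurable_snd borel_prod)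

lemma borel_measurable_dist_powr:
  "(\<lambda>w. ennreal (dist (fst w) (snd w) powr p)) \<in> borel_measurable (borel :: ('a::polish_space \<times> 'a) measure)"
proof -
  have "(\<lambda>w. ennreal (dist (fst w) (snd w) powr p)) \<in> borel_measurable (borel \<Otimes>\<^sub>M borel :: ('a \<times> 'a) measure)"
    by measurable
  then show ?thesis
    by (simp only: borel_prod)
qed

subsection \<open>Balls in ultrametric spaces\<close>

lemma ultrametricD:
  assumes "ultrametric TYPE('a::metric_space)"
  shows "dist (x::'a) z \<le> max (dist x y) (dist y z)"
  using assms unfolding ultrametric_def by blast

lemma ultrametric_powr:
  assumes "ultrametric TYPE('a::metric_space)" and "0 < p"
  shows "dist (x::'a) z powr p \<le> max (dist x y powr p) (dist y z powr p)"
proof (cases "dist x y \<le> dist y z")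
  case True
  then have "dist x z \<le> dist y z"
    using ultrametricD[OF assms(1), of x z y] by simp
  then show ?thesis
    using assms(2) by (simp add: le_max_iff_disj powr_mono2)
next
  case False
  then have "dist x z \<le> dist x y"
    using ultrametricD[OF assms(1), of x z y] by simp
  then show ?thesis
    using assms(2) by (simp add: le_max_iff_disj powr_mono2)
qed

lemma ultrametric_powr_triangle:
  assumes "ultrametric TYPE('a::metric_space)" and "0 < p"
  shows "dist (x::'a) z powr p \<le> dist x y powr p + dist y z powr p"
  using ultrametric_powr[OF assms, of x z y] powr_ge_zero[of "dist x y" p] powr_ge_zero[of "dist y z" p]
  by linarith

lemma ultrametric_powr_add_min:
  assumes "ultrametric TYPE('a::metric_space)" and "0 < p"
  shows "dist (u::'a) v powr p + min (dist u x powr p) (dist v x powr p) \<le> dist u x powr p + dist v x powr p"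
  using ultrametric_powr[OF assms, of u v x] by (simp add: dist_commute min_def max_def split: if_splits)

lemma ultrametric_dist_eq_outside_cball:
  assumes "ultrametric TYPE('a::metric_space)" and "(z::'a) \<in> cball x r" and "w \<notin> cball x r"
  shows "dist z w = dist x w"
  using ultrametricD[OF assms(1), of x w z] ultrametricD[OF assms(1), of z w x] assms(2,3)
  by (auto simp: dist_commute max_def split: if_splits)

(* Balls are taken for rho^p so that their radius is the level variable of the layer-cake formula. *)
definition powr_cball :: "real \<Rightarrow> 'a::metric_space \<Rightarrow> real \<Rightarrow> 'a set" where
  "powr_cball p z t = {y. dist z y powr p \<le> t}"

lemma mem_powr_cball [simp]: "y \<in> powr_cball p z t \<longleftrightarrow> dist z y powr p \<le> t"
  by (simp add: powr_cball_def)

lemma powr_cball_in_borel [measurable]: "powr_cball p (z::'a::polish_space) t \<in> sets borel"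
proof -
  have "{y \<in> space borel. dist z y powr p \<le> t} \<in> sets (borel :: 'a measure)"
    by measurable
  then show ?thesis
    by (simp add: powr_cball_def)
qed

lemma ultrametric_powr_cball_recenter:
  assumes U: "ultrametric TYPE('a::metric_space)" and p: "0 < p" and y: "(y::'a) \<in> powr_cball p c t"
  shows "powr_cball p y t = powr_cball p c t"
proof (intro set_eqI iffI)
  fix z assume "z \<in> powr_cball p y t"
  then show "z \<in> powr_cball p c t"
    using y ultrametric_powr[OF U p, of c z y] by simp
next
  fix z assume "z \<in> powr_cball p c t"
  then show "z \<in> powr_cball p y t"
    using y ultrametric_powr[OF U p, of y z c] by (simp add: dist_commute)
qed

definition powr_cball_partition :: "real \<Rightarrow> real \<Rightarrow> (nat \<Rightarrow> 'a::metric_space set) \<Rightarrow> bool" where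
  "powr_cball_partition p t C \<longleftrightarrow>
     disjoint_family C \<and> (\<Union>n. C n) = UNIV \<and> (\<forall>n. \<forall>y\<in>C n. powr_cball p y t = C n)"

lemma powr_cball_partition_in_borel:
  assumes "powr_cball_partition p t (C :: nat \<Rightarrow> 'a::polish_space set)"
  shows "C n \<in> sets borel"
proof (cases "C n = {}")
  case False
  then obtain y where "y \<in> C n" by blast
  then show ?thesis
    using assms unfolding powr_cball_partition_def by (metis powr_cball_in_borel)
qed simp

lemma powr_cball_partition_exists:
  assumes U: "ultrametric TYPE('a::polish_space)" and p: "0 < p" and t: "0 < t"
  obtains C :: "nat \<Rightarrow> 'a::polish_space set" where "powr_cball_partition p t C"
proof -
  obtain d :: "nat \<Rightarrow> 'a" where d: "\<And>z e. 0 < e \<Longrightarrow> \<exists>k. dist z (d k) < e"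
    using dense_sequenceE by blast
  define C where "C = disjointed (\<lambda>n. powr_cball p (d n) t)"
  have cover: "\<exists>k. z \<in> powr_cball p (d k) t" for z
  proof -
    obtain k where "dist z (d k) < t powr (1/p)"
      using d[of "t powr (1/p)"] t by auto
    then have "dist (d k) z powr p \<le> (t powr (1/p)) powr p"
      using p by (intro powr_mono2) (auto simp: dist_commute)
    then show ?thesis
      using p t by (auto simp: powr_powr)
  qed
  have "powr_cball p y t = C n" if y: "y \<in> C n" for n y
  proof -
    have y_n: "y \<in> powr_cball p (d n) t" and y_m: "\<And>m. m < n \<Longrightarrow> y \<notin> powr_cball p (d m) t"
      using y by (auto simp: C_def disjointed_def)
    have ball_n: "powr_cball p y t = powr_cball p (d n) t"
      by (rule ultrametric_powr_cball_recenter[OF U p y_n])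
    have disj: "z \<notin> powr_cball p (d m) t" if "m < n" and "z \<in> powr_cball p (d n) t" for m z
    proof
      assume "z \<in> powr_cball p (d m) t"
      then have "powr_cball p (d m) t = powr_cball p (d n) t"
        using that(2) ultrametric_powr_cball_recenter[OF U p] by metis
      then show False
        using y_m[OF that(1)] y_n by blast
    qed
    have "C n = powr_cball p (d n) t"
      unfolding C_def disjointed_def using disj by (auto simp del: mem_powr_cball)
    then show ?thesis
      using ball_n by simp
  qed
  moreover have "(\<Union>n. C n) = UNIV"
    unfolding C_def UN_disjointed_eq using cover by blast
  ultimately show thesis
    using that disjoint_family_disjointed unfolding powr_cball_partition_def C_def by blast
qed

lemma Int_stable_powr_cballs:
  assumes U: "ultrametric TYPE('a::metric_space)" and p: "0 < p"
  shows "Int_stable ({powr_cball p (z::'a) t | z t. 0 < t} \<union> {{}})"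
proof (rule Int_stableI)
  fix a b :: "'a set"
  assume a: "a \<in> {powr_cball p z t | z t. 0 < t} \<union> {{}}" and b: "b \<in> {powr_cball p z t | z t. 0 < t} \<union> {{}}"
  show "a \<inter> b \<in> {powr_cball p z t | z t. 0 < t} \<union> {{}}"
  proof (cases "a \<inter> b = {}")
    case False
    then obtain y where y: "y \<in> a" "y \<in> b"
      by blast
    from a y(1) obtain z1 t1 where a1: "a = powr_cball p z1 t1" and "0 < t1"
      by blast
    from b y(2) obtain z2 t2 where b2: "b = powr_cball p z2 t2" and "0 < t2"
      by blast
    have "a = powr_cball p y t1" and "b = powr_cball p y t2"
      using a1 b2 y ultrametric_powr_cball_recenter[OF U p, of y z1 t1]
        ultrametric_powr_cball_recenter[OF U p, of y z2 t2] by simp_all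
    then have "a \<inter> b = powr_cball p y (min t1 t2)"
      by auto
    then show ?thesis
      using \<open>0 < t1\<close> \<open>0 < t2\<close> by (intro UnI1 CollectI exI[of _ y] exI[of _ "min t1 t2"]) simp
  qed simp
qed

lemma ultrametric_open_eq_Union_powr_cballs:
  fixes d :: "nat \<Rightarrow> 'a::metric_space"
  assumes U: "ultrametric TYPE('a)" and p: "0 < p" and S: "open S"
    and d: "\<And>z e. 0 < e \<Longrightarrow> \<exists>k. dist z (d k) < e"
  shows "S = \<Union> ((\<lambda>(k, q). powr_cball p (d k) q) ` {(k, q). q \<in> \<rat> \<and> 0 < q \<and> powr_cball p (d k) q \<subseteq> S})"
proof (intro set_eqI iffI)
  fix y assume "y \<in> S"
  then obtain e where e: "0 < e" "ball y e \<subseteq> S"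
    using S open_contains_ball by blast
  define t where "t = (e / 2) powr p"
  have t: "0 < t"
    using e by (simp add: t_def)
  have small: "powr_cball p y t \<subseteq> S"
  proof
    fix z assume "z \<in> powr_cball p y t"
    then have "dist y z powr p \<le> (e / 2) powr p"
      by (simp add: t_def)
    then have "dist y z \<le> e / 2"
      using e p powr_less_mono2[of p "e / 2" "dist y z"] by force
    then show "z \<in> S"
      using e by auto
  qed
  obtain k where "dist y (d k) < (t/2) powr (1/p)"
    using d[of "(t/2) powr (1/p)"] t by auto
  then have "dist (d k) y powr p < ((t/2) powr (1/p)) powr p"
    using p by (intro powr_less_mono2) (auto simp: dist_commute)
  then have dk: "dist (d k) y powr p < t / 2"
    using p t by (simp add: powr_powr)
  obtain q where q: "q \<in> \<rat>" "t / 2 < q" "q < t"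
    using Rats_dense_in_real[of "t/2" t] t by auto
  have "powr_cball p (d k) q = powr_cball p y q"
    using ultrametric_powr_cball_recenter[OF U p, of y "d k" q] dk q by simp
  then have "powr_cball p (d k) q \<subseteq> S"
    using small q by auto
  moreover have "y \<in> powr_cball p (d k) q"
    using dk q by simp
  ultimately show "y \<in> \<Union> ((\<lambda>(k, q). powr_cball p (d k) q) ` {(k, q). q \<in> \<rat> \<and> 0 < q \<and> powr_cball p (d k) q \<subseteq> S})"
    using q t by force
qed (auto simp del: mem_powr_cball)

lemma sets_borel_eq_sigma_powr_cballs:
  assumes U: "ultrametric TYPE('a::polish_space)" and p: "0 < p"
  shows "sets borel = sigma_sets UNIV ({powr_cball p (z::'a) t | z t. 0 < t} \<union> {{}})"
proof -
  obtain d :: "nat \<Rightarrow> 'a" where d: "\<And>z e. 0 < e \<Longrightarrow> \<exists>k. dist z (d k) < e"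
    using dense_sequenceE by auto
  have "S \<in> sigma_sets UNIV ({powr_cball p z t | z t. 0 < t} \<union> {{}})" if "open S" for S :: "'a set"
  proof -
    let ?F = "(\<lambda>(k, q). powr_cball p (d k) q) ` {(k, q). q \<in> \<rat> \<and> 0 < q \<and> powr_cball p (d k) q \<subseteq> S}"
    have "countable ?F"
      by (rule countable_image, rule countable_subset[of _ "UNIV \<times> \<rat>"])
        (auto simp: countable_rat simp del: mem_powr_cball)
    then have "\<Union>?F \<in> sigma_sets UNIV ({powr_cball p z t | z t. 0 < t} \<union> {{}})"
      by (rule sigma_sets_UNION) (auto simp del: mem_powr_cball)
    then show ?thesis
      by (simp only: ultrametric_open_eq_Union_powr_cballs[OF U p that d, symmetric])
  qed
  then show ?thesis
    unfolding sets_borel by (intro sigma_sets_eqI) (auto simp: sets_borel[symmetric])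
qed

lemma measure_eqI_powr_cball:
  fixes \<alpha> \<beta> :: "'a::polish_space measure"
  assumes U: "ultrametric TYPE('a)" and p: "0 < p"
    and \<alpha>: "sets \<alpha> = sets borel" "finite_measure \<alpha>" and \<beta>: "sets \<beta> = sets borel"
    and eq: "\<And>z t. 0 < t \<Longrightarrow> emeasure \<alpha> (powr_cball p z t) = emeasure \<beta> (powr_cball p z t)"
  shows "\<alpha> = \<beta>"
proof -
  fix z0 :: 'a
  have "\<exists>k. y \<in> powr_cball p z0 (real (Suc k))" for y
  proof -
    obtain k where "dist z0 y powr p < real k"
      using reals_Archimedean2 by blast
    then show ?thesis
      by (intro exI[of _ k]) simp
  qed
  then have "(\<Union>k. powr_cball p z0 (real (Suc k))) = UNIV"
    by blast
  then show ?thesis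
  proof (rule measure_eqI_generator_eq[OF Int_stable_powr_cballs[OF U p], of UNIV, rotated 5])
    show "\<And>X. X \<in> {powr_cball p z t |z t. 0 < t} \<union> {{}} \<Longrightarrow> emeasure \<alpha> X = emeasure \<beta> X"
      using eq by auto
    show "range (\<lambda>k. powr_cball p z0 (real (Suc k))) \<subseteq> {powr_cball p z t |z t. 0 < t} \<union> {{}}"
      by (auto intro!: exI[of _ z0] simp del: mem_powr_cball)
    show "emeasure \<alpha> (powr_cball p z0 (real (Suc k))) \<noteq> \<infinity>" for k
      using finite_measure.emeasure_finite[OF \<alpha>(2)] by simp
  qed (use \<alpha>(1) \<beta> sets_borel_eq_sigma_powr_cballs[OF U p] in auto)
qed

lemma emeasure_powr_cball_eq_if_AE_radius:
  fixes \<alpha> \<beta> :: "'a::polish_space measure"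
  assumes \<alpha>: "sets \<alpha> = sets borel" "finite_measure \<alpha>" and \<beta>: "sets \<beta> = sets borel" "finite_measure \<beta>"
    and AE: "AE t in lborel. 0 < t \<longrightarrow> (\<forall>z. emeasure \<alpha> (powr_cball p z t) = emeasure \<beta> (powr_cball p z t))"
    and r: "0 < r"
  shows "emeasure \<alpha> (powr_cball p z r) = emeasure \<beta> (powr_cball p z r)"
proof -
  obtain m where m: "decseq m" "\<And>k. r < m k" "\<And>k. m k < r + 1 / real (Suc k)"
    and good: "\<And>k. 0 < m k \<longrightarrow> (\<forall>z. emeasure \<alpha> (powr_cball p z (m k)) = emeasure \<beta> (powr_cball p z (m k)))"
    using AE_lborel_decseq_from_right[OF AE, of r] by blast
  have dec: "decseq (\<lambda>k. powr_cball p z (m k))"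
    using m(1) unfolding decseq_def by (meson mem_powr_cball order_trans subsetI)
  have inter: "powr_cball p z r = (\<Inter>k. powr_cball p z (m k))"
  proof (intro set_eqI iffI)
    fix y assume y: "y \<in> (\<Inter>k. powr_cball p z (m k))"
    have "dist z y powr p - r \<le> 1 / real (Suc k)" for k
    proof -
      have "dist z y powr p \<le> m k"
        using y by auto
      then show ?thesis
        using m(3)[of k] by linarith
    qed
    then show "y \<in> powr_cball p z r"
      using le_zero_if_le_div_Suc[of "dist z y powr p - r" 1] by simp
  qed (use m(2) in \<open>auto intro: order_trans less_imp_le\<close>)
  have "range (\<lambda>k. powr_cball p z (m k)) \<subseteq> sets \<alpha>" and "range (\<lambda>k. powr_cball p z (m k)) \<subseteq> sets \<beta>"
    unfolding \<alpha>(1) \<beta>(1) by auto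
  then have "emeasure \<alpha> (powr_cball p z r) = (INF k. emeasure \<alpha> (powr_cball p z (m k)))"
    and "emeasure \<beta> (powr_cball p z r) = (INF k. emeasure \<beta> (powr_cball p z (m k)))"
    unfolding inter using dec finite_measure.emeasure_finite[OF \<alpha>(2)] finite_measure.emeasure_finite[OF \<beta>(2)]
    by (auto intro!: INF_emeasure_decseq[symmetric])
  then show ?thesis
    using good m(2) r by (simp add: less_trans[OF r])
qed

lemma wasserstein_spaceD:
  assumes "\<mu> \<in> wasserstein_space p"
  shows "sets \<mu> = sets borel" and "prob_space \<mu>" and "space \<mu> = UNIV"
  using assms unfolding wasserstein_space_def by (auto dest: sets_eq_imp_space_eq)

lemma return_in_wasserstein_space: "return borel (x::'a::polish_space) \<in> wasserstein_space p"
  unfolding wasserstein_space_def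
  by (auto intro!: prob_space_return exI[of _ x] simp: nn_integral_return)

definition potential :: "real \<Rightarrow> 'a::metric_space measure \<Rightarrow> 'a \<Rightarrow> ennreal" where
  "potential p \<mu> z = (\<integral>\<^sup>+ y. ennreal (dist y z powr p) \<partial>\<mu>)"

lemma potential_less_top:
  fixes \<mu> :: "'a::polish_space measure"
  assumes U: "ultrametric TYPE('a)" and p: "0 < p" and \<mu>: "\<mu> \<in> wasserstein_space p"
  shows "potential p \<mu> z < \<top>"
proof -
  obtain x where x: "potential p \<mu> x < \<top>"
    using \<mu> unfolding wasserstein_space_def potential_def by auto
  interpret prob_space \<mu>
    using wasserstein_spaceD[OF \<mu>] by simp
  note [measurable_cong] = wasserstein_spaceD(1)[OF \<mu>]
  have "potential p \<mu> z \<le> (\<integral>\<^sup>+ y. ennreal (dist y x powr p) + ennreal (dist x z powr p) \<partial>\<mu>)"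
    unfolding potential_def using ultrametric_powr_triangle[OF U p]
    by (intro nn_integral_mono) (simp add: ennreal_plus[symmetric] del: ennreal_plus)
  also have "\<dots> = potential p \<mu> x + ennreal (dist x z powr p)"
    unfolding potential_def by (subst nn_integral_add) (auto simp: emeasure_space_1)
  also have "\<dots> < \<top>"
    using x by simp
  finally show ?thesis .
qed

lemma uniform_measure_in_wasserstein_space:
  fixes \<mu> :: "'a::polish_space measure"
  assumes U: "ultrametric TYPE('a)" and p: "0 < p" and \<mu>: "\<mu> \<in> wasserstein_space p"
    and S: "S \<in> sets borel" and "emeasure \<mu> S \<noteq> 0"
  shows "uniform_measure \<mu> S \<in> wasserstein_space p"
proof -
  interpret prob_space \<mu>
    using wasserstein_spaceD[OF \<mu>] by simp
  note [measurable_cong] = wasserstein_spaceD(1)[OF \<mu>]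
  fix x :: 'a
  have "(\<integral>\<^sup>+ y. ennreal (dist y x powr p) * indicator S y \<partial>\<mu>) \<le> potential p \<mu> x"
    unfolding potential_def by (intro nn_integral_mono) (auto split: split_indicator)
  also have "\<dots> < \<top>"
    by (rule potential_less_top[OF U p \<mu>])
  finally have "(\<integral>\<^sup>+ y. ennreal (dist y x powr p) * indicator S y \<partial>\<mu>) / emeasure \<mu> S < \<top>"
    using assms(5) by (subst less_top[symmetric]) (auto simp: ennreal_divide_eq_top_iff)
  then have "(\<integral>\<^sup>+ y. ennreal (dist y x powr p) \<partial>uniform_measure \<mu> S) < \<top>"
    using S by (subst nn_integral_uniform_measure) auto
  then show ?thesis
    unfolding wasserstein_space_def
    using S assms(5) wasserstein_spaceD[OF \<mu>]
    by (auto intro!: prob_space_uniform_measure simp: emeasure_eq_measure)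
qed

subsection \<open>Optimal transport cost\<close>

definition coupling_cost :: "real \<Rightarrow> ('a::metric_space \<times> 'a) measure \<Rightarrow> ennreal" where
  "coupling_cost p \<pi> = (\<integral>\<^sup>+ w. ennreal (dist (fst w) (snd w) powr p) \<partial>\<pi>)"

definition transport_cost :: "real \<Rightarrow> 'a::metric_space measure \<Rightarrow> 'a measure \<Rightarrow> real" where
  "transport_cost p \<mu> \<nu> = enn2real (INF \<pi>\<in>couplings \<mu> \<nu>. coupling_cost p \<pi>)"

lemma wasserstein_dist_eq_transport_cost:
  "wasserstein_dist p \<mu> \<nu> = transport_cost p \<mu> \<nu> powr min (1/p) 1"
  by (simp add: wasserstein_dist_def transport_cost_def coupling_cost_def)

lemma transport_cost_eq_if_wasserstein_dist_eq:
  assumes "0 < p" and "wasserstein_dist p \<mu> \<nu> = wasserstein_dist p \<mu>' \<nu>'"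
  shows "transport_cost p \<mu> \<nu> = transport_cost p \<mu>' \<nu>'"
proof (rule powr_eq_powr_imp_eq)
  show "0 \<le> transport_cost p \<mu> \<nu>" and "0 \<le> transport_cost p \<mu>' \<nu>'"
    by (simp_all add: transport_cost_def)
  show "0 < min (1/p) 1"
    using assms(1) by simp
  show "transport_cost p \<mu> \<nu> powr min (1/p) 1 = transport_cost p \<mu>' \<nu>' powr min (1/p) 1"
    using assms(2) by (simp only: wasserstein_dist_eq_transport_cost)
qed

lemma couplingsD:
  fixes \<pi> :: "('a::polish_space \<times> 'a) measure"
  assumes "\<pi> \<in> couplings \<mu> \<nu>"
  shows "sets \<pi> = sets (borel \<Otimes>\<^sub>M borel)" and "prob_space \<pi>"
    and "distr \<pi> borel fst = \<mu>" and "distr \<pi> borel snd = \<nu>"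
  using assms unfolding couplings_def mem_Collect_eq borel_prod by blast+

lemma pair_measure_in_couplings:
  fixes \<mu> \<nu> :: "'a::polish_space measure"
  assumes "\<mu> \<in> wasserstein_space p" and "\<nu> \<in> wasserstein_space p"
  shows "\<mu> \<Otimes>\<^sub>M \<nu> \<in> couplings \<mu> \<nu>"
proof -
  note \<mu> = wasserstein_spaceD[OF assms(1)] and \<nu> = wasserstein_spaceD[OF assms(2)]
  have "distr (\<mu> \<Otimes>\<^sub>M \<nu>) borel fst = distr (\<mu> \<Otimes>\<^sub>M \<nu>) \<mu> fst"
    using \<mu>(1) by (intro distr_cong) simp_all
  also have "\<dots> = \<mu>"
    using prob_space.distr_pair_fst[OF \<nu>(2)] .
  finally have fst: "distr (\<mu> \<Otimes>\<^sub>M \<nu>) borel fst = \<mu>" .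
  have "distr (\<mu> \<Otimes>\<^sub>M \<nu>) borel snd = distr (\<mu> \<Otimes>\<^sub>M \<nu>) \<nu> snd"
    using \<nu>(1) by (intro distr_cong) simp_all
  also have "\<dots> = \<nu>"
    using distr_pair_snd[OF \<mu>(2) prob_space_imp_sigma_finite[OF \<nu>(2)]] .
  finally have snd: "distr (\<mu> \<Otimes>\<^sub>M \<nu>) borel snd = \<nu>" .
  have "sets (\<mu> \<Otimes>\<^sub>M \<nu>) = sets (borel :: ('a \<times> 'a) measure)"
    using sets_pair_measure_cong[OF \<mu>(1) \<nu>(1)] by (simp only: borel_prod)
  then show ?thesis
    unfolding couplings_def using fst snd prob_space_pair[OF \<mu>(2) \<nu>(2)] by blast
qed

lemma transport_cost_le_coupling_cost:
  assumes "\<pi> \<in> couplings \<mu> \<nu>" and "coupling_cost p \<pi> < \<top>"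
  shows "transport_cost p \<mu> \<nu> \<le> enn2real (coupling_cost p \<pi>)"
  unfolding transport_cost_def using assms by (intro enn2real_mono INF_lower) auto

lemma transport_cost_eqI:
  assumes "couplings \<mu> \<nu> \<noteq> {}" and "\<And>\<pi>. \<pi> \<in> couplings \<mu> \<nu> \<Longrightarrow> coupling_cost p \<pi> = c"
  shows "transport_cost p \<mu> \<nu> = enn2real c"
  unfolding transport_cost_def using assms by (simp cong: INF_cong)

lemma swap_in_couplings:
  fixes \<pi> :: "('a::polish_space \<times> 'a) measure"
  assumes "\<pi> \<in> couplings \<mu> \<nu>"
  defines "\<pi>' \<equiv> distr \<pi> borel (\<lambda>w. (snd w, fst w))"
  shows "\<pi>' \<in> couplings \<nu> \<mu>" and "coupling_cost p \<pi>' = coupling_cost p \<pi>"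
proof -
  note \<pi> = couplingsD[OF assms(1)]
  have "(\<lambda>w. (snd w, fst w)) \<in> measurable (borel \<Otimes>\<^sub>M borel) (borel \<Otimes>\<^sub>M borel :: ('a \<times> 'a) measure)"
    by measurable
  then have swap: "(\<lambda>w. (snd w, fst w)) \<in> measurable \<pi> borel"
    by (simp add: measurable_cong_sets[OF \<pi>(1) refl] borel_prod)
  have "distr \<pi>' borel fst = \<nu>" and "distr \<pi>' borel snd = \<mu>"
    using \<pi>(3,4) unfolding \<pi>'_def distr_distr[OF measurable_fst_snd_borel(1) swap]
      distr_distr[OF measurable_fst_snd_borel(2) swap] comp_def
    by simp_all
  moreover have "sets \<pi>' = sets borel" and "prob_space \<pi>'"
    unfolding \<pi>'_def using prob_space.prob_space_distr[OF \<pi>(2) swap] by simp_all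
  ultimately show "\<pi>' \<in> couplings \<nu> \<mu>"
    unfolding couplings_def by blast
  have "coupling_cost p \<pi>' = (\<integral>\<^sup>+ w. ennreal (dist (snd w) (fst w) powr p) \<partial>\<pi>)"
    unfolding coupling_cost_def \<pi>'_def using borel_measurable_dist_powr
    by (subst nn_integral_distr[OF swap]) simp_all
  then show "coupling_cost p \<pi>' = coupling_cost p \<pi>"
    by (simp add: coupling_cost_def dist_commute)
qed

lemma transport_cost_commute:
  fixes \<mu> \<nu> :: "'a::polish_space measure"
  shows "transport_cost p \<mu> \<nu> = transport_cost p \<nu> \<mu>"
proof -
  have le: "(INF \<pi>\<in>couplings \<nu> \<mu>. coupling_cost p \<pi>) \<le> (INF \<pi>\<in>couplings \<mu> \<nu>. coupling_cost p \<pi>)"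
    for \<mu> \<nu> :: "'a measure"
    by (rule INF_greatest, rule INF_lower2[OF swap_in_couplings(1)]) (auto simp: swap_in_couplings(2))
  show ?thesis
    unfolding transport_cost_def using antisym[OF le[of \<mu> \<nu>] le[of \<nu> \<mu>]] by simp
qed

lemma coupling_cost_return_right:
  fixes \<nu> :: "'a::polish_space measure"
  assumes "\<pi> \<in> couplings \<nu> (return borel x)"
  shows "coupling_cost p \<pi> = potential p \<nu> x"
proof -
  note \<pi> = couplingsD[OF assms]
  note [measurable_cong] = \<pi>(1)
  have "emeasure \<pi> (snd -` (- {x}) \<inter> space \<pi>) = emeasure (distr \<pi> borel snd) (- {x})"
    by (subst emeasure_distr) auto
  then have "AE w in \<pi>. snd w = x"
    using \<pi>(4) by (intro AE_I'[of "snd -` (- {x}) \<inter> space \<pi>"]) auto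
  then have "coupling_cost p \<pi> = (\<integral>\<^sup>+ w. ennreal (dist (fst w) x powr p) \<partial>\<pi>)"
    unfolding coupling_cost_def by (intro nn_integral_cong_AE) auto
  also have "\<dots> = potential p \<nu> x"
    unfolding potential_def \<pi>(3)[symmetric] by (subst nn_integral_distr) auto
  finally show ?thesis .
qed

lemma transport_cost_return_right:
  fixes \<nu> :: "'a::polish_space measure"
  assumes "\<nu> \<in> wasserstein_space p"
  shows "transport_cost p \<nu> (return borel x) = enn2real (potential p \<nu> x)"
  using pair_measure_in_couplings[OF assms return_in_wasserstein_space]
  by (intro transport_cost_eqI coupling_cost_return_right) auto

lemma transport_cost_return_return:
  "transport_cost p (return borel (x::'a::polish_space)) (return borel y) = dist x y powr p"
  by (simp add: transport_cost_return_right[OF return_in_wasserstein_space] potential_def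
      nn_integral_return)

subsection \<open>Dirac masses are the measures not lying between two others\<close>

lemma nn_integral_pair_measure_dist_powr_add:
  fixes \<nu>1 \<nu>2 :: "'a::polish_space measure"
  assumes [measurable_cong]: "sets \<nu>1 = sets borel" "sets \<nu>2 = sets borel"
    and "prob_space \<nu>1" and "prob_space \<nu>2"
  shows "(\<integral>\<^sup>+ w. ennreal (dist (fst w) x powr p) + ennreal (dist (snd w) x powr p) \<partial>(\<nu>1 \<Otimes>\<^sub>M \<nu>2))
    = potential p \<nu>1 x + potential p \<nu>2 x"
proof -
  have "(\<integral>\<^sup>+ w. ennreal (dist (fst w) x powr p) + ennreal (dist (snd w) x powr p) \<partial>(\<nu>1 \<Otimes>\<^sub>M \<nu>2))
      = (\<integral>\<^sup>+ w. ennreal (dist (fst w) x powr p) \<partial>(\<nu>1 \<Otimes>\<^sub>M \<nu>2)) + (\<integral>\<^sup>+ w. ennreal (dist (snd w) x powr p) \<partial>(\<nu>1 \<Otimes>\<^sub>M \<nu>2))"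
    by (rule nn_integral_add) measurable
  also have "(\<integral>\<^sup>+ w. ennreal (dist (fst w) x powr p) \<partial>(\<nu>1 \<Otimes>\<^sub>M \<nu>2)) = potential p \<nu>1 x"
    unfolding potential_def by (rule nn_integral_pair_measure_fst[OF assms(4)]) measurable
  also have "(\<integral>\<^sup>+ w. ennreal (dist (snd w) x powr p) \<partial>(\<nu>1 \<Otimes>\<^sub>M \<nu>2)) = potential p \<nu>2 x"
    unfolding potential_def
    by (rule nn_integral_pair_measure_snd[OF assms(3) prob_space_imp_sigma_finite[OF assms(4)]]) measurable
  finally show ?thesis .
qed

lemma coupling_cost_pair_measure_less:
  fixes \<nu>1 \<nu>2 :: "'a::polish_space measure"
  assumes U: "ultrametric TYPE('a)" and p: "0 < p"
    and \<nu>1: "\<nu>1 \<in> wasserstein_space p" and \<nu>2: "\<nu>2 \<in> wasserstein_space p"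
    and "\<nu>1 \<noteq> return borel x" and "\<nu>2 \<noteq> return borel x"
  shows "coupling_cost p (\<nu>1 \<Otimes>\<^sub>M \<nu>2) < potential p \<nu>1 x + potential p \<nu>2 x"
proof (rule ennreal_less_if_add_pos_le)
  note W1 = wasserstein_spaceD[OF \<nu>1] and W2 = wasserstein_spaceD[OF \<nu>2]
  note [measurable_cong] = W1(1) W2(1)
  interpret P: pair_prob_space \<nu>1 \<nu>2
    using W1(2) W2(2) by (simp add: pair_prob_space_def pair_sigma_finite_def prob_space_imp_sigma_finite)
  let ?Q = "\<nu>1 \<Otimes>\<^sub>M \<nu>2"
  define m where "m w = ennreal (min (dist (fst w) x powr p) (dist (snd w) x powr p))" for w :: "'a \<times> 'a"
  have m: "m \<in> borel_measurable ?Q"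
    unfolding m_def by measurable
  have "coupling_cost p ?Q + (\<integral>\<^sup>+ w. m w \<partial>?Q)
      = (\<integral>\<^sup>+ w. ennreal (dist (fst w) (snd w) powr p) + m w \<partial>?Q)"
    unfolding coupling_cost_def using m by (subst nn_integral_add) auto
  also have "\<dots> \<le> (\<integral>\<^sup>+ w. ennreal (dist (fst w) x powr p) + ennreal (dist (snd w) x powr p) \<partial>?Q)"
    using ultrametric_powr_add_min[OF U p]
    by (intro nn_integral_mono) (simp add: m_def ennreal_plus[symmetric] del: ennreal_plus)
  finally show "coupling_cost p ?Q + (\<integral>\<^sup>+ w. m w \<partial>?Q) \<le> potential p \<nu>1 x + potential p \<nu>2 x"
    by (simp only: nn_integral_pair_measure_dist_powr_add[OF W1(1) W2(1) W1(2) W2(2)])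
  show "0 < (\<integral>\<^sup>+ w. m w \<partial>?Q)"
  proof (rule nn_integral_pos_if_pos_on[OF m])
    show "(- {x}) \<times> (- {x}) \<in> sets ?Q"
      by measurable
    show "0 < emeasure ?Q ((- {x}) \<times> (- {x}))"
      using emeasure_compl_singleton_pos[OF W1(1,2) assms(5)] emeasure_compl_singleton_pos[OF W2(1,2) assms(6)]
      by (subst P.M2.emeasure_pair_measure_Times) (auto simp: ennreal_zero_less_mult_iff)
    show "0 < m w" if "w \<in> (- {x}) \<times> (- {x})" for w
      using that p by (auto simp: m_def mem_Times_iff)
  qed
  show "potential p \<nu>1 x + potential p \<nu>2 x < \<top>"
    using potential_less_top[OF U p \<nu>1] potential_less_top[OF U p \<nu>2] by simp
qed

lemma transport_cost_less_through_return:
  fixes \<nu>1 \<nu>2 :: "'a::polish_space measure"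
  assumes U: "ultrametric TYPE('a)" and p: "0 < p"
    and \<nu>1: "\<nu>1 \<in> wasserstein_space p" and \<nu>2: "\<nu>2 \<in> wasserstein_space p"
    and "\<nu>1 \<noteq> return borel x" and "\<nu>2 \<noteq> return borel x"
  shows "transport_cost p \<nu>1 \<nu>2 < transport_cost p \<nu>1 (return borel x) + transport_cost p (return borel x) \<nu>2"
proof -
  have fin: "potential p \<nu>1 x + potential p \<nu>2 x < \<top>"
    using potential_less_top[OF U p \<nu>1] potential_less_top[OF U p \<nu>2] by simp
  note less = coupling_cost_pair_measure_less[OF assms]
  have "transport_cost p \<nu>1 \<nu>2 \<le> enn2real (coupling_cost p (\<nu>1 \<Otimes>\<^sub>M \<nu>2))"
    using order.strict_trans[OF less fin]
    by (intro transport_cost_le_coupling_cost pair_measure_in_couplings[OF \<nu>1 \<nu>2])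
  also have "\<dots> < enn2real (potential p \<nu>1 x + potential p \<nu>2 x)"
    using less fin by (cases "coupling_cost p (\<nu>1 \<Otimes>\<^sub>M \<nu>2)"; cases "potential p \<nu>1 x + potential p \<nu>2 x")
      (auto simp: ennreal_less_iff)
  also have "\<dots> = transport_cost p \<nu>1 (return borel x) + transport_cost p (return borel x) \<nu>2"
    using fin transport_cost_commute[of p "return borel x" \<nu>2]
    by (simp add: transport_cost_return_right \<nu>1 \<nu>2 enn2real_plus)
  finally show ?thesis .
qed

(* A sample (u, v) of the product of mu conditioned on S with mu is sent to (v, v) if v lies in S
   and left alone otherwise: this couples the conditional measure with mu, and only the mass
   that mu puts outside S is transported. *)
definition conditional_plan :: "'a set \<Rightarrow> 'a \<times> 'a \<Rightarrow> 'a \<times> 'a" where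
  "conditional_plan S w = (if snd w \<in> S then (snd w, snd w) else w)"

lemma measurable_conditional_plan:
  fixes M N :: "'a::polish_space measure"
  assumes [measurable_cong]: "sets M = sets borel" "sets N = sets borel" and [measurable]: "S \<in> sets borel"
  shows "conditional_plan S \<in> measurable (M \<Otimes>\<^sub>M N) borel"
proof -
  have "conditional_plan S \<in> measurable (M \<Otimes>\<^sub>M N) (borel \<Otimes>\<^sub>M borel)"
    unfolding conditional_plan_def by measurable
  then show ?thesis
    by (simp only: borel_prod)
qed

lemma distr_fst_conditional_plan:
  fixes \<mu> :: "'a::polish_space measure"
  assumes \<mu>: "sets \<mu> = sets borel" "prob_space \<mu>" and S: "S \<in> sets borel" "emeasure \<mu> S \<noteq> 0"
  defines "\<nu> \<equiv> uniform_measure \<mu> S"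
  shows "distr (\<nu> \<Otimes>\<^sub>M \<mu>) borel (fst \<circ> conditional_plan S) = \<nu>"
proof (rule measure_eqI)
  interpret \<mu>: prob_space \<mu> by (rule \<mu>(2))
  have \<nu>: "sets \<nu> = sets borel" "prob_space \<nu>"
    using \<mu>(1) S(2) unfolding \<nu>_def by (auto intro!: prob_space_uniform_measure)
  interpret \<nu>: prob_space \<nu> by (rule \<nu>(2))
  fix T :: "'a set" assume "T \<in> sets (distr (\<nu> \<Otimes>\<^sub>M \<mu>) borel (fst \<circ> conditional_plan S))"
  then have T: "T \<in> sets borel" by simp
  define a where "a = measure \<mu> S"
  define t where "t = measure \<mu> (S \<inter> T)"
  have a: "0 < a" "a \<le> 1"
    using S(2) by (auto simp: a_def \<mu>.emeasure_eq_measure zero_less_measure_iff)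
  have \<nu>T: "emeasure \<nu> T = ennreal (t / a)"
    using S T \<mu>(1) unfolding \<nu>_def
    by (simp add: measure_uniform_measure \<nu>.emeasure_eq_measure[unfolded \<nu>_def] a_def t_def \<mu>.emeasure_eq_measure)
  have plan: "fst \<circ> conditional_plan S \<in> measurable (\<nu> \<Otimes>\<^sub>M \<mu>) borel"
    using measurable_conditional_plan[OF \<nu>(1) \<mu>(1) S(1)] measurable_fst_snd_borel(1) by (rule measurable_comp)
  have "(fst \<circ> conditional_plan S) -` T \<inter> space (\<nu> \<Otimes>\<^sub>M \<mu>) = UNIV \<times> (S \<inter> T) \<union> T \<times> (- S)"
    by (auto simp: conditional_plan_def space_pair_measure sets_eq_imp_space_eq[OF \<mu>(1)]
        sets_eq_imp_space_eq[OF \<nu>(1)] split: if_splits)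
  then have "emeasure (distr (\<nu> \<Otimes>\<^sub>M \<mu>) borel (fst \<circ> conditional_plan S)) T
      = emeasure (\<nu> \<Otimes>\<^sub>M \<mu>) (UNIV \<times> (S \<inter> T)) + emeasure (\<nu> \<Otimes>\<^sub>M \<mu>) (T \<times> (- S))"
    using S(1) T by (simp add: emeasure_distr[OF plan T], intro plus_emeasure[symmetric])
      (auto intro!: pair_measureI simp: \<mu>(1) \<nu>(1))
  also have "emeasure (\<nu> \<Otimes>\<^sub>M \<mu>) (UNIV \<times> (S \<inter> T)) = emeasure \<nu> UNIV * emeasure \<mu> (S \<inter> T)"
    using S(1) T by (intro \<mu>.emeasure_pair_measure_Times) (auto simp: \<mu>(1) \<nu>(1))
  also have "emeasure \<nu> UNIV = 1"
    using \<nu>.emeasure_space_1 sets_eq_imp_space_eq[OF \<nu>(1)] by simp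
  also have "emeasure (\<nu> \<Otimes>\<^sub>M \<mu>) (T \<times> (- S)) = emeasure \<nu> T * emeasure \<mu> (- S)"
    using S(1) T by (intro \<mu>.emeasure_pair_measure_Times) (auto simp: \<mu>(1) \<nu>(1))
  also have "emeasure \<mu> (- S) = ennreal (1 - a)"
    using S(1) \<mu>.prob_compl[of S] sets_eq_imp_space_eq[OF \<mu>(1)]
    by (simp add: \<mu>(1) \<mu>.emeasure_eq_measure a_def Compl_eq_Diff_UNIV)
  also have "1 * emeasure \<mu> (S \<inter> T) + emeasure \<nu> T * ennreal (1 - a) = ennreal (t + t / a * (1 - a))"
    using a \<nu>T by (simp add: \<mu>.emeasure_eq_measure t_def ennreal_mult[symmetric]
        ennreal_plus[symmetric] del: ennreal_plus)
  also have "t + t / a * (1 - a) = t / a"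
    using a by (simp add: field_simps)
  finally show "emeasure (distr (\<nu> \<Otimes>\<^sub>M \<mu>) borel (fst \<circ> conditional_plan S)) T = emeasure \<nu> T"
    using \<nu>T by (simp add: comp_def)
qed (simp add: \<nu>_def \<mu>(1))

lemma conditional_coupling:
  fixes \<mu> :: "'a::polish_space measure"
  assumes \<mu>: "sets \<mu> = sets borel" "prob_space \<mu>" and S: "S \<in> sets borel" "emeasure \<mu> S \<noteq> 0"
  obtains \<pi> where "\<pi> \<in> couplings (uniform_measure \<mu> S) \<mu>"
    and "coupling_cost p \<pi> = (\<integral>\<^sup>+ u. \<integral>\<^sup>+ v. indicator (- S) v * ennreal (dist u v powr p) \<partial>\<mu> \<partial>uniform_measure \<mu> S)"
proof -
  interpret \<mu>: prob_space \<mu> by (rule \<mu>(2))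
  let ?\<nu> = "uniform_measure \<mu> S"
  have \<nu>: "sets ?\<nu> = sets borel" "prob_space ?\<nu>"
    using \<mu>(1) S(2) by (auto intro!: prob_space_uniform_measure)
  note [measurable_cong] = \<mu>(1) \<nu>(1) and [measurable] = S(1)
  let ?Q = "?\<nu> \<Otimes>\<^sub>M \<mu>"
  note plan = measurable_conditional_plan[OF \<nu>(1) \<mu>(1) S(1)]
  define \<pi> where "\<pi> = distr ?Q borel (conditional_plan S)"
  have "distr \<pi> borel fst = ?\<nu>"
    unfolding \<pi>_def distr_distr[OF measurable_fst_snd_borel(1) plan] by (rule distr_fst_conditional_plan[OF \<mu> S])
  moreover have "distr \<pi> borel snd = \<mu>"
  proof -
    have "distr \<pi> borel snd = distr ?Q borel snd"
      unfolding \<pi>_def distr_distr[OF measurable_fst_snd_borel(2) plan]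
      by (rule arg_cong[where f="distr ?Q borel"]) (auto simp: conditional_plan_def)
    also have "\<dots> = distr ?Q \<mu> snd"
      using \<mu>(1) by (intro distr_cong) simp_all
    finally show ?thesis
      using distr_pair_snd[OF \<nu>(2) prob_space_imp_sigma_finite[OF \<mu>(2)]] by simp
  qed
  ultimately have "\<pi> \<in> couplings ?\<nu> \<mu>"
    unfolding couplings_def \<pi>_def
    using prob_space.prob_space_distr[OF prob_space_pair[OF \<nu>(2) \<mu>(2)] plan] by simp
  moreover have "coupling_cost p \<pi> = (\<integral>\<^sup>+ w. indicator (- S) (snd w) * ennreal (dist (fst w) (snd w) powr p) \<partial>?Q)"
    unfolding coupling_cost_def \<pi>_def using borel_measurable_dist_powr
    by (subst nn_integral_distr[OF plan])
      (auto simp: conditional_plan_def intro!: nn_integral_cong split: split_indicator)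
  moreover have "\<dots> = (\<integral>\<^sup>+ u. \<integral>\<^sup>+ v. indicator (- S) v * ennreal (dist u v powr p) \<partial>\<mu> \<partial>?\<nu>)"
    using \<mu>.nn_integral_fst[of "\<lambda>w. indicator (- S) (snd w) * ennreal (dist (fst w) (snd w) powr p)" ?\<nu>]
    by simp
  ultimately show thesis
    using that by simp
qed

lemma coupling_cost_across_cball:
  fixes \<pi> :: "('a::polish_space \<times> 'a) measure"
  assumes U: "ultrametric TYPE('a)" and \<pi>: "\<pi> \<in> couplings \<nu>1 \<nu>2"
    and inside: "AE y in \<nu>1. y \<in> cball x r" and outside: "AE y in \<nu>2. y \<notin> cball x r"
  shows "coupling_cost p \<pi> = potential p \<nu>2 x"
proof -
  note \<pi> = couplingsD[OF \<pi>]
  have fst: "fst \<in> measurable \<pi> borel" and snd: "snd \<in> measurable \<pi> borel"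
    unfolding measurable_cong_sets[OF \<pi>(1) refl] by simp_all
  have "AE w in \<pi>. fst w \<in> cball x r" and "AE w in \<pi>. snd w \<notin> cball x r"
    using inside outside unfolding \<pi>(3,4)[symmetric]
    by (simp_all add: AE_distr_iff[OF fst] AE_distr_iff[OF snd] borel_closed borel_comp Compl_eq)
  then have "AE w in \<pi>. dist (fst w) (snd w) = dist (snd w) x"
    by eventually_elim (metis ultrametric_dist_eq_outside_cball[OF U] dist_commute)
  then have "coupling_cost p \<pi> = (\<integral>\<^sup>+ w. ennreal (dist (snd w) x powr p) \<partial>\<pi>)"
    unfolding coupling_cost_def by (intro nn_integral_cong_AE) auto
  also have "\<dots> = potential p \<nu>2 x"
    unfolding potential_def \<pi>(4)[symmetric] using snd by (subst nn_integral_distr) auto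
  finally show ?thesis .
qed

(* Each point of the ball is as far from a point outside it as the centre is, so every cost
   below reduces to an integral of rho(y, x)^p over the complement of the ball. *)
locale cball_split =
  fixes p :: real and \<mu> :: "'a::polish_space measure" and x :: 'a and r :: real
  assumes ultrametric: "ultrametric TYPE('a)" and pos: "0 < p" and \<mu>: "\<mu> \<in> wasserstein_space p"
    and cball_pos: "0 < emeasure \<mu> (cball x r)" and cball_less_1: "emeasure \<mu> (cball x r) < 1"
begin

sublocale M: prob_space \<mu>
  by (rule wasserstein_spaceD(2)[OF \<mu>])

definition inner :: "'a measure" where "inner = uniform_measure \<mu> (cball x r)"
definition outer :: "'a measure" where "outer = uniform_measure \<mu> (- cball x r)"
definition mass :: real where "mass = measure \<mu> (cball x r)"
definition outer_moment :: ennreal where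
  "outer_moment = (\<integral>\<^sup>+ y. indicator (- cball x r) y * ennreal (dist y x powr p) \<partial>\<mu>)"

lemma cball_in_borel: "cball x r \<in> sets borel" and compl_cball_in_borel: "- cball x r \<in> sets borel"
  by (simp_all add: borel_closed borel_comp)

lemma mass: "0 < mass" "mass < 1"
  using cball_pos cball_less_1 by (simp_all add: mass_def M.emeasure_eq_measure)

lemma emeasure_cball: "emeasure \<mu> (cball x r) = ennreal mass"
  and emeasure_compl_cball: "emeasure \<mu> (- cball x r) = ennreal (1 - mass)"
  using M.prob_compl[of "cball x r"] cball_in_borel
  by (simp_all add: mass_def M.emeasure_eq_measure wasserstein_spaceD(1,3)[OF \<mu>] Compl_eq_Diff_UNIV)

lemma inner_in_wasserstein_space: "inner \<in> wasserstein_space p"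
  and outer_in_wasserstein_space: "outer \<in> wasserstein_space p"
  unfolding inner_def outer_def using mass emeasure_cball emeasure_compl_cball cball_in_borel compl_cball_in_borel
  by (auto intro!: uniform_measure_in_wasserstein_space[OF ultrametric pos \<mu>])

lemma AE_inner: "AE y in inner. y \<in> cball x r"
  and AE_outer: "AE y in outer. y \<notin> cball x r"
  unfolding inner_def outer_def using mass emeasure_cball emeasure_compl_cball cball_in_borel compl_cball_in_borel
  by (simp_all add: AE_uniform_measure wasserstein_spaceD(1)[OF \<mu>])

lemma inner_neq: "inner \<noteq> \<mu>" and outer_neq: "outer \<noteq> \<mu>"
  using mass emeasure_cball emeasure_compl_cball cball_in_borel compl_cball_in_borel
  by (auto dest!: arg_cong[where f="\<lambda>M. emeasure M (- cball x r)"] arg_cong[where f="\<lambda>M. emeasure M (cball x r)"]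
      simp: inner_def outer_def emeasure_uniform_measure Int_commute wasserstein_spaceD(1)[OF \<mu>])

lemma outer_moment_less_top: "outer_moment < \<top>"
proof -
  have "outer_moment \<le> potential p \<mu> x"
    unfolding outer_moment_def potential_def by (intro nn_integral_mono) (simp add: indicator_def)
  then show ?thesis
    using potential_less_top[OF ultrametric pos \<mu>, of x] by order
qed

lemma potential_outer: "potential p outer x = outer_moment / ennreal (1 - mass)"
  unfolding potential_def outer_moment_def outer_def emeasure_compl_cball[symmetric]
  using compl_cball_in_borel wasserstein_spaceD(1)[OF \<mu>]
  by (subst nn_integral_uniform_measure) (auto simp: mult.commute)

lemma transport_cost_inner_outer: "transport_cost p inner outer = enn2real (potential p outer x)"
  using pair_measure_in_couplings[OF inner_in_wasserstein_space outer_in_wasserstein_space] AE_inner AE_outer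
  by (intro transport_cost_eqI coupling_cost_across_cball[OF ultrametric]) auto

lemma transport_cost_inner_le: "transport_cost p inner \<mu> \<le> enn2real outer_moment"
proof -
  note W = wasserstein_spaceD[OF \<mu>]
  obtain \<pi> where \<pi>: "\<pi> \<in> couplings inner \<mu>"
    and cost: "coupling_cost p \<pi> = (\<integral>\<^sup>+ u. \<integral>\<^sup>+ v. indicator (- cball x r) v * ennreal (dist u v powr p) \<partial>\<mu> \<partial>inner)"
    using conditional_coupling[OF W(1,2) cball_in_borel] emeasure_cball mass unfolding inner_def by auto
  note cost
  also have "\<dots> = (\<integral>\<^sup>+ u. outer_moment \<partial>inner)"
  proof (intro nn_integral_cong_AE)
    show "AE u in inner. (\<integral>\<^sup>+ v. indicator (- cball x r) v * ennreal (dist u v powr p) \<partial>\<mu>) = outer_moment"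
      using AE_inner unfolding outer_moment_def
    proof eventually_elim
      case (elim u)
      have "dist u v = dist v x" if "v \<notin> cball x r" for v
        using elim that ultrametric_dist_eq_outside_cball[OF ultrametric, of u x r v] by (simp add: dist_commute)
      then show ?case
        by (intro nn_integral_cong) (simp split: split_indicator)
    qed
  qed
  also have "\<dots> = outer_moment"
    using prob_space.emeasure_space_1[OF wasserstein_spaceD(2)[OF inner_in_wasserstein_space]]
      wasserstein_spaceD(3)[OF inner_in_wasserstein_space] by simp
  finally show ?thesis
    using transport_cost_le_coupling_cost[OF \<pi>, of p] outer_moment_less_top by simp
qed

lemma transport_cost_outer_le: "transport_cost p \<mu> outer \<le> enn2real (potential p outer x) * mass"
proof -
  note W = wasserstein_spaceD[OF \<mu>]
  obtain \<pi> where \<pi>: "\<pi> \<in> couplings outer \<mu>"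
    and cost: "coupling_cost p \<pi> = (\<integral>\<^sup>+ u. \<integral>\<^sup>+ v. indicator (cball x r) v * ennreal (dist u v powr p) \<partial>\<mu> \<partial>outer)"
    using conditional_coupling[OF W(1,2) compl_cball_in_borel] emeasure_compl_cball mass unfolding outer_def by auto
  note cost
  also have "\<dots> = (\<integral>\<^sup>+ u. ennreal (dist u x powr p) * ennreal mass \<partial>outer)"
  proof (intro nn_integral_cong_AE)
    show "AE u in outer. (\<integral>\<^sup>+ v. indicator (cball x r) v * ennreal (dist u v powr p) \<partial>\<mu>) = ennreal (dist u x powr p) * ennreal mass"
      using AE_outer
    proof eventually_elim
      case (elim u)
      then have "(\<integral>\<^sup>+ v. indicator (cball x r) v * ennreal (dist u v powr p) \<partial>\<mu>)
          = (\<integral>\<^sup>+ v. ennreal (dist u x powr p) * indicator (cball x r) v \<partial>\<mu>)"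
        by (intro nn_integral_cong)
          (simp add: ultrametric_dist_eq_outside_cball[OF ultrametric, of _ x r u] dist_commute split: split_indicator)
      then show ?case
        using cball_in_borel W(1) emeasure_cball by (simp add: nn_integral_cmult_indicator)
    qed
  qed
  also have "\<dots> = potential p outer x * ennreal mass"
    unfolding potential_def using wasserstein_spaceD(1)[OF outer_in_wasserstein_space] by (simp add: nn_integral_multc)
  finally have "coupling_cost p \<pi> = potential p outer x * ennreal mass" .
  moreover have "potential p outer x < \<top>"
    by (rule potential_less_top[OF ultrametric pos outer_in_wasserstein_space])
  ultimately show ?thesis
    using transport_cost_le_coupling_cost[OF \<pi>, of p] mass
    by (simp add: transport_cost_commute[of p \<mu>] enn2real_mult ennreal_mult_less_top)
qed

lemma transport_cost_between:
  "transport_cost p inner \<mu> + transport_cost p \<mu> outer \<le> transport_cost p inner outer"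
proof -
  define m where "m = enn2real outer_moment"
  have "outer_moment = ennreal m" and "0 \<le> m"
    using outer_moment_less_top by (simp_all add: m_def)
  then have "enn2real (potential p outer x) = m / (1 - mass)"
    using mass by (simp add: potential_outer divide_ennreal)
  moreover have "m + m / (1 - mass) * mass = m / (1 - mass)"
    using mass by (simp add: field_simps)
  ultimately show ?thesis
    using transport_cost_inner_le transport_cost_outer_le transport_cost_inner_outer m_def by simp
qed

end

lemma not_return_imp_between:
  fixes \<mu> :: "'a::polish_space measure"
  assumes U: "ultrametric TYPE('a)" and p: "0 < p" and \<mu>: "\<mu> \<in> wasserstein_space p"
    and not_return: "\<And>x. \<mu> \<noteq> return borel x"
  obtains \<nu>1 \<nu>2 where "\<nu>1 \<in> wasserstein_space p" and "\<nu>2 \<in> wasserstein_space p"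
    and "\<nu>1 \<noteq> \<mu>" and "\<nu>2 \<noteq> \<mu>"
    and "transport_cost p \<nu>1 \<mu> + transport_cost p \<mu> \<nu>2 \<le> transport_cost p \<nu>1 \<nu>2"
proof -
  obtain x r where "0 < emeasure \<mu> (cball x r)" and "emeasure \<mu> (cball x r) < 1"
    using cball_measure_strictly_between[OF wasserstein_spaceD(1,2)[OF \<mu>] not_return] by blast
  then interpret cball_split p \<mu> x r
    using U p \<mu> by unfold_locales
  show thesis
    using that inner_in_wasserstein_space outer_in_wasserstein_space inner_neq outer_neq transport_cost_between
    by blast
qed

(* Defined through the transport cost only, hence invariant under isometries of the Wasserstein
   space. *)
definition lies_between :: "real \<Rightarrow> 'a::metric_space measure \<Rightarrow> bool" where
  "lies_between p \<mu> \<longleftrightarrow> (\<exists>\<nu>1\<in>wasserstein_space p. \<exists>\<nu>2\<in>wasserstein_space p. \<nu>1 \<noteq> \<mu> \<and> \<nu>2 \<noteq> \<mu> \<and>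
     transport_cost p \<nu>1 \<mu> + transport_cost p \<mu> \<nu>2 \<le> transport_cost p \<nu>1 \<nu>2)"

lemma return_iff_not_lies_between:
  fixes \<mu> :: "'a::polish_space measure"
  assumes U: "ultrametric TYPE('a)" and p: "0 < p" and \<mu>: "\<mu> \<in> wasserstein_space p"
  shows "(\<exists>x. \<mu> = return borel x) \<longleftrightarrow> \<not> lies_between p \<mu>"
proof
  assume "\<exists>x. \<mu> = return borel x"
  then show "\<not> lies_between p \<mu>"
    unfolding lies_between_def using transport_cost_less_through_return[OF U p] by force
next
  assume "\<not> lies_between p \<mu>"
  then show "\<exists>x. \<mu> = return borel x"
    using not_return_imp_between[OF U p \<mu>] unfolding lies_between_def by metis
qed

subsection \<open>Measures with finite moments are determined by their potentials\<close>

lemma emeasure_pair_measure_powr_dist_le: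
  fixes M N :: "'a::polish_space measure"
  assumes C: "powr_cball_partition p t C"
    and M: "sets M = sets borel" and N: "sets N = sets borel" "prob_space N"
  shows "emeasure (M \<Otimes>\<^sub>M N) {w. dist (fst w) (snd w) powr p \<le> t} = (\<Sum>n. emeasure M (C n) * emeasure N (C n))"
proof -
  interpret N: prob_space N by (rule N(2))
  have C_borel: "C n \<in> sets borel" for n
    by (rule powr_cball_partition_in_borel[OF C])
  have "{w. dist (fst w) (snd w) powr p \<le> t} = (\<Union>n. C n \<times> C n)"
  proof (intro set_eqI iffI)
    fix w :: "'a \<times> 'a" assume w: "w \<in> {w. dist (fst w) (snd w) powr p \<le> t}"
    obtain n where n: "fst w \<in> C n"
      using C unfolding powr_cball_partition_def by blast
    then have "snd w \<in> C n"
      using w C unfolding powr_cball_partition_def by (metis mem_Collect_eq mem_powr_cball)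
    then show "w \<in> (\<Union>n. C n \<times> C n)"
      using n by (auto simp: mem_Times_iff)
  next
    fix w :: "'a \<times> 'a" assume "w \<in> (\<Union>n. C n \<times> C n)"
    then obtain n where "fst w \<in> C n" "snd w \<in> C n"
      by (auto simp: mem_Times_iff)
    then show "w \<in> {w. dist (fst w) (snd w) powr p \<le> t}"
      using C unfolding powr_cball_partition_def by (metis mem_Collect_eq mem_powr_cball)
  qed
  moreover have "disjoint_family (\<lambda>n. C n \<times> C n)"
    using C unfolding powr_cball_partition_def disjoint_family_on_def by auto
  moreover have "range (\<lambda>n. C n \<times> C n) \<subseteq> sets (M \<Otimes>\<^sub>M N)"
    using C_borel M N by auto
  ultimately have "emeasure (M \<Otimes>\<^sub>M N) {w. dist (fst w) (snd w) powr p \<le> t} = (\<Sum>n. emeasure (M \<Otimes>\<^sub>M N) (C n \<times> C n))"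
    by (simp add: suminf_emeasure)
  also have "\<dots> = (\<Sum>n. emeasure M (C n) * emeasure N (C n))"
    using C_borel M N by (simp add: N.emeasure_pair_measure_Times)
  finally show ?thesis .
qed

definition dist_tail :: "real \<Rightarrow> 'a::metric_space measure \<Rightarrow> 'a measure \<Rightarrow> real \<Rightarrow> real" where
  "dist_tail p M N t = measure (M \<Otimes>\<^sub>M N) {w \<in> space (M \<Otimes>\<^sub>M N). t < dist (fst w) (snd w) powr p}"

lemma dist_tail_partition:
  fixes M N :: "'a::polish_space measure"
  assumes C: "powr_cball_partition p t C"
    and M: "sets M = sets borel" "prob_space M" and N: "sets N = sets borel" "prob_space N"
  shows "summable (\<lambda>n. measure M (C n) * measure N (C n))"
    and "dist_tail p M N t = 1 - (\<Sum>n. measure M (C n) * measure N (C n))"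
proof -
  interpret M: prob_space M by (rule M(2))
  interpret N: prob_space N by (rule N(2))
  interpret P: pair_prob_space M N ..
  note [measurable_cong] = M(1) N(1)
  have C_borel: "C n \<in> sets borel" for n
    by (rule powr_cball_partition_in_borel[OF C])
  have sums_M: "(\<lambda>n. measure M (C n)) sums measure M (\<Union>n. C n)"
  proof (rule measure_UNION)
    show "range C \<subseteq> sets M"
      unfolding M(1) using C_borel by blast
    show "disjoint_family C"
      using C unfolding powr_cball_partition_def by blast
  qed (simp add: M.emeasure_eq_measure)
  show sum: "summable (\<lambda>n. measure M (C n) * measure N (C n))"
  proof (rule summable_comparison_test'[OF sums_summable[OF sums_M]])
    show "norm (measure M (C n) * measure N (C n)) \<le> measure M (C n)" for n
      by (simp add: mult_left_le)
  qed
  have space_Q: "space (M \<Otimes>\<^sub>M N) = UNIV"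
    by (simp add: space_pair_measure sets_eq_imp_space_eq[OF M(1)] sets_eq_imp_space_eq[OF N(1)])
  have "{w \<in> space (M \<Otimes>\<^sub>M N). dist (fst w) (snd w) powr p \<le> t} \<in> sets (M \<Otimes>\<^sub>M N)"
    by measurable
  then have le: "{w. dist (fst w) (snd w) powr p \<le> t} \<in> sets (M \<Otimes>\<^sub>M N)"
    by (simp add: space_Q)
  have "emeasure (M \<Otimes>\<^sub>M N) {w. dist (fst w) (snd w) powr p \<le> t}
      = (\<Sum>n. ennreal (measure M (C n) * measure N (C n)))"
    by (simp add: emeasure_pair_measure_powr_dist_le[OF C M(1) N] M.emeasure_eq_measure
        N.emeasure_eq_measure ennreal_mult)
  also have "\<dots> = ennreal (\<Sum>n. measure M (C n) * measure N (C n))"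
    by (rule suminf_ennreal2[OF _ sum]) simp
  finally have "measure (M \<Otimes>\<^sub>M N) {w. dist (fst w) (snd w) powr p \<le> t} = (\<Sum>n. measure M (C n) * measure N (C n))"
    using suminf_nonneg[OF sum] by (simp add: P.emeasure_eq_measure)
  moreover have "{w \<in> space (M \<Otimes>\<^sub>M N). t < dist (fst w) (snd w) powr p}
      = space (M \<Otimes>\<^sub>M N) - {w. dist (fst w) (snd w) powr p \<le> t}"
    using space_Q by auto
  ultimately show "dist_tail p M N t = 1 - (\<Sum>n. measure M (C n) * measure N (C n))"
    unfolding dist_tail_def using P.prob_compl[OF le] by simp
qed

lemma dist_tail_energy:
  fixes \<alpha> \<beta> :: "'a::polish_space measure"
  assumes C: "powr_cball_partition p t C"
    and \<alpha>: "sets \<alpha> = sets borel" "prob_space \<alpha>" and \<beta>: "sets \<beta> = sets borel" "prob_space \<beta>"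
  shows "(\<lambda>n. (measure \<alpha> (C n) - measure \<beta> (C n))\<^sup>2)
    sums (2 * dist_tail p \<alpha> \<beta> t - dist_tail p \<alpha> \<alpha> t - dist_tail p \<beta> \<beta> t)"
proof -
  define a where "a n = measure \<alpha> (C n)" for n
  define b where "b n = measure \<beta> (C n)" for n
  note tail = dist_tail_partition[OF C]
  have sq: "(\<lambda>n. (a n - b n)\<^sup>2) = (\<lambda>n. a n * a n + b n * b n - 2 * (a n * b n))"
    by (simp add: fun_eq_iff power2_eq_square algebra_simps)
  have "(\<lambda>n. a n * a n + b n * b n - 2 * (a n * b n))
      sums ((\<Sum>n. a n * a n) + (\<Sum>n. b n * b n) - 2 * (\<Sum>n. a n * b n))"
    unfolding a_def b_def using tail(1)[OF \<alpha> \<alpha>] tail(1)[OF \<beta> \<beta>] tail(1)[OF \<alpha> \<beta>]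
    by (intro sums_diff sums_add sums_mult summable_sums)
  moreover have "(\<Sum>n. a n * a n) + (\<Sum>n. b n * b n) - 2 * (\<Sum>n. a n * b n)
      = 2 * dist_tail p \<alpha> \<beta> t - dist_tail p \<alpha> \<alpha> t - dist_tail p \<beta> \<beta> t"
    unfolding a_def b_def tail(2)[OF \<alpha> \<alpha>] tail(2)[OF \<beta> \<beta>] tail(2)[OF \<alpha> \<beta>] by argo
  ultimately show ?thesis
    unfolding sq[unfolded a_def b_def, symmetric] a_def b_def by (simp only:)
qed

lemma dist_tail_energy_nonneg:
  fixes \<alpha> \<beta> :: "'a::polish_space measure"
  assumes U: "ultrametric TYPE('a)" and p: "0 < p" and t: "0 < t"
    and \<alpha>: "sets \<alpha> = sets borel" "prob_space \<alpha>" and \<beta>: "sets \<beta> = sets borel" "prob_space \<beta>"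
  shows "0 \<le> 2 * dist_tail p \<alpha> \<beta> t - dist_tail p \<alpha> \<alpha> t - dist_tail p \<beta> \<beta> t"
proof -
  obtain C :: "nat \<Rightarrow> 'a set" where C: "powr_cball_partition p t C"
    using powr_cball_partition_exists[OF U p t] by blast
  show ?thesis
    using sums_le[of "\<lambda>_. 0", OF _ sums_zero dist_tail_energy[OF C \<alpha> \<beta>]] by simp
qed

lemma dist_tail_energy_eq_0_imp_eq:
  fixes \<alpha> \<beta> :: "'a::polish_space measure"
  assumes U: "ultrametric TYPE('a)" and p: "0 < p" and t: "0 < t"
    and \<alpha>: "sets \<alpha> = sets borel" "prob_space \<alpha>" and \<beta>: "sets \<beta> = sets borel" "prob_space \<beta>"
    and zero: "2 * dist_tail p \<alpha> \<beta> t - dist_tail p \<alpha> \<alpha> t - dist_tail p \<beta> \<beta> t = 0"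
  shows "emeasure \<alpha> (powr_cball p z t) = emeasure \<beta> (powr_cball p z t)"
proof -
  obtain C :: "nat \<Rightarrow> 'a set" where C: "powr_cball_partition p t C"
    using powr_cball_partition_exists[OF U p t] by blast
  have "(\<lambda>n. (measure \<alpha> (C n) - measure \<beta> (C n))\<^sup>2) sums 0"
    using dist_tail_energy[OF C \<alpha> \<beta>] zero by simp
  then have "(measure \<alpha> (C n) - measure \<beta> (C n))\<^sup>2 = 0" for n
    using suminf_eq_zero_iff[of "\<lambda>n. (measure \<alpha> (C n) - measure \<beta> (C n))\<^sup>2"] by (simp add: sums_iff)
  moreover obtain n where "z \<in> C n"
    using C unfolding powr_cball_partition_def by blast
  then have "powr_cball p z t = C n"
    using C unfolding powr_cball_partition_def by blast
  ultimately show ?thesis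
    using finite_measure.emeasure_eq_measure[OF prob_space.finite_measure[OF \<alpha>(2)]]
      finite_measure.emeasure_eq_measure[OF prob_space.finite_measure[OF \<beta>(2)]] by simp
qed

lemma coupling_cost_pair_measure:
  fixes M N :: "'a::polish_space measure"
  assumes "sets M = sets borel" and "sets N = sets borel" and "prob_space N"
  shows "coupling_cost p (M \<Otimes>\<^sub>M N) = (\<integral>\<^sup>+ x. potential p N x \<partial>M)"
proof -
  interpret N: prob_space N by fact
  note [measurable_cong] = assms(1,2)
  have f: "(\<lambda>w. ennreal (dist (fst w) (snd w) powr p)) \<in> borel_measurable (M \<Otimes>\<^sub>M N)"
    by measurable
  have "coupling_cost p (M \<Otimes>\<^sub>M N) = (\<integral>\<^sup>+ x. \<integral>\<^sup>+ y. ennreal (dist x y powr p) \<partial>N \<partial>M)"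
    unfolding coupling_cost_def using N.nn_integral_fst[OF f] by simp
  then show ?thesis
    by (simp add: potential_def dist_commute)
qed

lemma coupling_cost_pair_measure_layer_cake:
  fixes M N :: "'a::polish_space measure"
  assumes M: "sets M = sets borel" "prob_space M" and N: "sets N = sets borel" "prob_space N"
  shows "coupling_cost p (M \<Otimes>\<^sub>M N) = (\<integral>\<^sup>+ t. ennreal (dist_tail p M N t) * indicator {0<..} t \<partial>lborel)"
proof -
  interpret Q: prob_space "M \<Otimes>\<^sub>M N"
    by (rule prob_space_pair[OF M(2) N(2)])
  note [measurable_cong] = M(1) N(1)
  have "(\<lambda>w. dist (fst w) (snd w) powr p) \<in> borel_measurable (M \<Otimes>\<^sub>M N)"
    by measurable
  then show ?thesis
    unfolding coupling_cost_def dist_tail_def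
    by (subst nn_integral_layer_cake) (simp_all add: Q.emeasure_eq_measure Q.sigma_finite_measure_axioms)
qed

lemma borel_measurable_dist_tail:
  fixes M N :: "'a::polish_space measure"
  assumes M: "sets M = sets borel" "prob_space M" and N: "sets N = sets borel" "prob_space N"
  shows "dist_tail p M N \<in> borel_measurable borel"
proof -
  interpret Q: prob_space "M \<Otimes>\<^sub>M N"
    by (rule prob_space_pair[OF M(2) N(2)])
  note [measurable_cong] = M(1) N(1)
  have "antimono (dist_tail p M N)"
  proof (rule antimonoI)
    fix s t :: real assume "s \<le> t"
    moreover have "{w \<in> space (M \<Otimes>\<^sub>M N). s < dist (fst w) (snd w) powr p} \<in> sets (M \<Otimes>\<^sub>M N)"
      by measurable
    ultimately show "dist_tail p M N t \<le> dist_tail p M N s"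
      unfolding dist_tail_def by (intro Q.finite_measure_mono) auto
  qed
  then have "(\<lambda>t. - dist_tail p M N t) \<in> borel_measurable borel"
    by (intro borel_measurable_mono) (simp add: antimono_def monotone_on_def)
  then show ?thesis
    by simp
qed

lemma coupling_cost_energy_identity:
  fixes \<alpha> \<beta> :: "'a::polish_space measure"
  assumes U: "ultrametric TYPE('a)" and p: "0 < p"
    and \<alpha>: "sets \<alpha> = sets borel" "prob_space \<alpha>" and \<beta>: "sets \<beta> = sets borel" "prob_space \<beta>"
  defines "R \<equiv> \<lambda>t. 2 * dist_tail p \<alpha> \<beta> t - dist_tail p \<alpha> \<alpha> t - dist_tail p \<beta> \<beta> t"
  shows "coupling_cost p (\<alpha> \<Otimes>\<^sub>M \<alpha>) + coupling_cost p (\<beta> \<Otimes>\<^sub>M \<beta>)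
      + (\<integral>\<^sup>+ t. ennreal (R t) * indicator {0<..} t \<partial>lborel)
    = coupling_cost p (\<alpha> \<Otimes>\<^sub>M \<beta>) + coupling_cost p (\<alpha> \<Otimes>\<^sub>M \<beta>)"
proof -
  let ?K = "\<lambda>M N t. ennreal (dist_tail p M N t) * indicator {0<..} t"
  have K: "?K M N \<in> borel_measurable lborel"
    if "sets M = sets borel" "prob_space M" "sets N = sets borel" "prob_space N" for M N :: "'a measure"
    using borel_measurable_dist_tail[OF that] by (simp add: measurable_lborel1)
  have "R \<in> borel_measurable borel"
    unfolding R_def using borel_measurable_dist_tail[OF \<alpha> \<beta>] borel_measurable_dist_tail[OF \<alpha> \<alpha>]
      borel_measurable_dist_tail[OF \<beta> \<beta>] by measurable
  then have R: "(\<lambda>t. ennreal (R t) * indicator {0<..} t) \<in> borel_measurable lborel"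
    by (simp add: measurable_lborel1)
  have pointwise: "?K \<alpha> \<alpha> t + ?K \<beta> \<beta> t + ennreal (R t) * indicator {0<..} t = ?K \<alpha> \<beta> t + ?K \<alpha> \<beta> t" for t
  proof (cases "0 < t")
    case True
    have "0 \<le> dist_tail p M N t" for M N :: "'a measure"
      by (simp add: dist_tail_def)
    then show ?thesis
      using True dist_tail_energy_nonneg[OF U p True \<alpha> \<beta>]
      by (simp add: R_def ennreal_plus[symmetric] del: ennreal_plus)
  qed simp
  have "(\<integral>\<^sup>+ t. ?K \<alpha> \<alpha> t \<partial>lborel) + (\<integral>\<^sup>+ t. ?K \<beta> \<beta> t \<partial>lborel) + (\<integral>\<^sup>+ t. ennreal (R t) * indicator {0<..} t \<partial>lborel)
      = (\<integral>\<^sup>+ t. ?K \<alpha> \<alpha> t + ?K \<beta> \<beta> t + ennreal (R t) * indicator {0<..} t \<partial>lborel)"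
    using K[OF \<alpha> \<alpha>] K[OF \<beta> \<beta>] R by (simp only: nn_integral_add borel_measurable_add)
  also have "\<dots> = (\<integral>\<^sup>+ t. ?K \<alpha> \<beta> t + ?K \<alpha> \<beta> t \<partial>lborel)"
    by (simp only: pointwise)
  also have "\<dots> = (\<integral>\<^sup>+ t. ?K \<alpha> \<beta> t \<partial>lborel) + (\<integral>\<^sup>+ t. ?K \<alpha> \<beta> t \<partial>lborel)"
    using K[OF \<alpha> \<beta>] K[OF \<alpha> \<beta>] by (rule nn_integral_add)
  finally show ?thesis
    by (simp only: coupling_cost_pair_measure_layer_cake[OF \<alpha> \<alpha>] coupling_cost_pair_measure_layer_cake[OF \<beta> \<beta>]
        coupling_cost_pair_measure_layer_cake[OF \<alpha> \<beta>])
qed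

lemma coupling_cost_pair_measure_less_top:
  fixes \<alpha> \<beta> :: "'a::polish_space measure"
  assumes U: "ultrametric TYPE('a)" and p: "0 < p"
    and \<alpha>: "\<alpha> \<in> wasserstein_space p" and \<beta>: "\<beta> \<in> wasserstein_space p"
  shows "coupling_cost p (\<alpha> \<Otimes>\<^sub>M \<beta>) < \<top>"
proof -
  note A = wasserstein_spaceD[OF \<alpha>] and B = wasserstein_spaceD[OF \<beta>]
  interpret \<alpha>: prob_space \<alpha> by (rule A(2))
  interpret \<beta>: prob_space \<beta> by (rule B(2))
  note [measurable_cong] = A(1) B(1)
  fix x0 :: 'a
  have "potential p \<beta> x \<le> potential p \<beta> x0 + ennreal (dist x0 x powr p)" for x
  proof -
    have "potential p \<beta> x \<le> (\<integral>\<^sup>+ y. ennreal (dist y x0 powr p) + ennreal (dist x0 x powr p) \<partial>\<beta>)"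
      unfolding potential_def using ultrametric_powr_triangle[OF U p]
      by (intro nn_integral_mono) (simp add: ennreal_plus[symmetric] del: ennreal_plus)
    also have "\<dots> = potential p \<beta> x0 + ennreal (dist x0 x powr p)"
      unfolding potential_def by (subst nn_integral_add) (auto simp: \<beta>.emeasure_space_1)
    finally show ?thesis .
  qed
  then have "coupling_cost p (\<alpha> \<Otimes>\<^sub>M \<beta>) \<le> (\<integral>\<^sup>+ x. potential p \<beta> x0 + ennreal (dist x0 x powr p) \<partial>\<alpha>)"
    unfolding coupling_cost_pair_measure[OF A(1) B(1,2)] by (intro nn_integral_mono)
  also have "\<dots> = potential p \<beta> x0 + potential p \<alpha> x0"
    unfolding potential_def by (subst nn_integral_add) (auto simp: \<alpha>.emeasure_space_1 dist_commute)
  also have "\<dots> < \<top>"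
    using potential_less_top[OF U p \<alpha>] potential_less_top[OF U p \<beta>] by simp
  finally show ?thesis .
qed

lemma coupling_cost_pair_measure_eq_if_potential_eq:
  fixes \<alpha> \<beta> :: "'a::polish_space measure"
  assumes \<alpha>: "sets \<alpha> = sets borel" "prob_space \<alpha>" and \<beta>: "sets \<beta> = sets borel" "prob_space \<beta>"
    and eq: "\<And>z. potential p \<alpha> z = potential p \<beta> z"
  shows "coupling_cost p (\<alpha> \<Otimes>\<^sub>M \<alpha>) = coupling_cost p (\<alpha> \<Otimes>\<^sub>M \<beta>)"
    and "coupling_cost p (\<beta> \<Otimes>\<^sub>M \<beta>) = coupling_cost p (\<alpha> \<Otimes>\<^sub>M \<beta>)"
proof -
  interpret P: pair_prob_space \<alpha> \<beta>
    using \<alpha>(2) \<beta>(2) by (simp add: pair_prob_space_def pair_sigma_finite_def prob_space_imp_sigma_finite)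
  note [measurable_cong] = \<alpha>(1) \<beta>(1)
  have "(\<integral>\<^sup>+ y. potential p \<alpha> y \<partial>\<beta>) = (\<integral>\<^sup>+ x. potential p \<beta> x \<partial>\<alpha>)"
    unfolding potential_def using P.Fubini'[of "\<lambda>x y. ennreal (dist x y powr p)"]
    by (simp add: dist_commute)
  then show "coupling_cost p (\<alpha> \<Otimes>\<^sub>M \<alpha>) = coupling_cost p (\<alpha> \<Otimes>\<^sub>M \<beta>)"
    and "coupling_cost p (\<beta> \<Otimes>\<^sub>M \<beta>) = coupling_cost p (\<alpha> \<Otimes>\<^sub>M \<beta>)"
    by (simp_all add: coupling_cost_pair_measure \<alpha> \<beta> eq)
qed

lemma potential_eq_imp_eq:
  fixes \<alpha> \<beta> :: "'a::polish_space measure"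
  assumes U: "ultrametric TYPE('a)" and p: "0 < p"
    and \<alpha>: "\<alpha> \<in> wasserstein_space p" and \<beta>: "\<beta> \<in> wasserstein_space p"
    and eq: "\<And>z. potential p \<alpha> z = potential p \<beta> z"
  shows "\<alpha> = \<beta>"
proof -
  note A = wasserstein_spaceD[OF \<alpha>] and B = wasserstein_spaceD[OF \<beta>]
  note [measurable_cong] = A(1) B(1)
  define R where "R t = 2 * dist_tail p \<alpha> \<beta> t - dist_tail p \<alpha> \<alpha> t - dist_tail p \<beta> \<beta> t" for t
  have "coupling_cost p (\<alpha> \<Otimes>\<^sub>M \<beta>) + coupling_cost p (\<alpha> \<Otimes>\<^sub>M \<beta>)
      + (\<integral>\<^sup>+ t. ennreal (R t) * indicator {0<..} t \<partial>lborel)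
    = coupling_cost p (\<alpha> \<Otimes>\<^sub>M \<beta>) + coupling_cost p (\<alpha> \<Otimes>\<^sub>M \<beta>) + 0"
    using coupling_cost_energy_identity[OF U p A(1,2) B(1,2)]
      coupling_cost_pair_measure_eq_if_potential_eq[OF A(1,2) B(1,2) eq] unfolding R_def by simp
  then have "(\<integral>\<^sup>+ t. ennreal (R t) * indicator {0<..} t \<partial>lborel) = 0"
    using coupling_cost_pair_measure_less_top[OF U p \<alpha> \<beta>] by (auto simp: ennreal_add_left_cancel)
  moreover have "R \<in> borel_measurable borel"
    unfolding R_def using borel_measurable_dist_tail[OF A(1,2) B(1,2)] borel_measurable_dist_tail[OF A(1,2) A(1,2)]
      borel_measurable_dist_tail[OF B(1,2) B(1,2)] by measurable
  ultimately have "AE t in lborel. ennreal (R t) * indicator {0<..} t = 0"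
    by (subst (asm) nn_integral_0_iff_AE) (auto simp: measurable_lborel1)
  then have "AE t in lborel. 0 < t \<longrightarrow> (\<forall>z. emeasure \<alpha> (powr_cball p z t) = emeasure \<beta> (powr_cball p z t))"
  proof eventually_elim
    case (elim t)
    show ?case
    proof (intro impI allI)
      fix z assume t: "0 < t"
      then have "R t \<le> 0"
        using elim by (simp add: ennreal_eq_0_iff)
      then have "R t = 0"
        using dist_tail_energy_nonneg[OF U p t A(1,2) B(1,2)] unfolding R_def by simp
      then show "emeasure \<alpha> (powr_cball p z t) = emeasure \<beta> (powr_cball p z t)"
        using dist_tail_energy_eq_0_imp_eq[OF U p t A(1,2) B(1,2)] unfolding R_def by simp
    qed
  qed
  then show ?thesis
    using A B prob_space.finite_measure
    by (intro measure_eqI_powr_cball[OF U p A(1)] emeasure_powr_cball_eq_if_AE_radius) auto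
qed

subsection \<open>Isometries of the Wasserstein space\<close>

locale wasserstein_isometry =
  fixes p :: real and \<Phi> :: "'a::polish_space measure \<Rightarrow> 'a measure"
  assumes ultrametric: "ultrametric TYPE('a)" and pos: "0 < p"
    and bij: "bij_betw \<Phi> (wasserstein_space p) (wasserstein_space p)"
    and isometric: "\<And>\<mu> \<nu>. \<mu> \<in> wasserstein_space p \<Longrightarrow> \<nu> \<in> wasserstein_space p \<Longrightarrow>
      wasserstein_dist p (\<Phi> \<mu>) (\<Phi> \<nu>) = wasserstein_dist p \<mu> \<nu>"
begin

lemma image_in_wasserstein_space: "\<mu> \<in> wasserstein_space p \<Longrightarrow> \<Phi> \<mu> \<in> wasserstein_space p"
  using bij by (rule bij_betw_apply)

lemma transport_cost_image:
  "\<mu> \<in> wasserstein_space p \<Longrightarrow> \<nu> \<in> wasserstein_space p \<Longrightarrow> transport_cost p (\<Phi> \<mu>) (\<Phi> \<nu>) = transport_cost p \<mu> \<nu>"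
  using transport_cost_eq_if_wasserstein_dist_eq[OF pos isometric] .

lemma lies_between_image:
  assumes \<mu>: "\<mu> \<in> wasserstein_space p"
  shows "lies_between p (\<Phi> \<mu>) \<longleftrightarrow> lies_between p \<mu>"
proof
  assume "lies_between p (\<Phi> \<mu>)"
  then obtain \<nu>1 \<nu>2 where \<nu>: "\<nu>1 \<in> wasserstein_space p" "\<nu>2 \<in> wasserstein_space p" "\<nu>1 \<noteq> \<Phi> \<mu>" "\<nu>2 \<noteq> \<Phi> \<mu>"
    and le: "transport_cost p \<nu>1 (\<Phi> \<mu>) + transport_cost p (\<Phi> \<mu>) \<nu>2 \<le> transport_cost p \<nu>1 \<nu>2"
    unfolding lies_between_def by blast
  have "\<nu>1 \<in> \<Phi> ` wasserstein_space p" and "\<nu>2 \<in> \<Phi> ` wasserstein_space p"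
    using \<nu>(1,2) bij_betw_imp_surj_on[OF bij] by simp_all
  then obtain \<nu>1' \<nu>2' where \<nu>': "\<nu>1' \<in> wasserstein_space p" "\<nu>2' \<in> wasserstein_space p"
    and "\<nu>1 = \<Phi> \<nu>1'" "\<nu>2 = \<Phi> \<nu>2'"
    by auto
  with \<nu>(3,4) le have "\<nu>1' \<noteq> \<mu>" "\<nu>2' \<noteq> \<mu>"
    and "transport_cost p \<nu>1' \<mu> + transport_cost p \<mu> \<nu>2' \<le> transport_cost p \<nu>1' \<nu>2'"
    by (auto simp: transport_cost_image \<mu>)
  with \<nu>' show "lies_between p \<mu>"
    unfolding lies_between_def by blast
next
  assume "lies_between p \<mu>"
  then obtain \<nu>1 \<nu>2 where \<nu>: "\<nu>1 \<in> wasserstein_space p" "\<nu>2 \<in> wasserstein_space p" "\<nu>1 \<noteq> \<mu>" "\<nu>2 \<noteq> \<mu>"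
    and le: "transport_cost p \<nu>1 \<mu> + transport_cost p \<mu> \<nu>2 \<le> transport_cost p \<nu>1 \<nu>2"
    unfolding lies_between_def by blast
  have "\<Phi> \<nu>1 \<noteq> \<Phi> \<mu>" and "\<Phi> \<nu>2 \<noteq> \<Phi> \<mu>"
    using \<nu> \<mu> bij_betw_imp_inj_on[OF bij] by (auto dest: inj_onD)
  moreover have "transport_cost p (\<Phi> \<nu>1) (\<Phi> \<mu>) + transport_cost p (\<Phi> \<mu>) (\<Phi> \<nu>2)
      \<le> transport_cost p (\<Phi> \<nu>1) (\<Phi> \<nu>2)"
    using le by (simp add: transport_cost_image \<nu>(1,2) \<mu>)
  ultimately show "lies_between p (\<Phi> \<mu>)"
    unfolding lies_between_def using \<nu>(1,2) image_in_wasserstein_space by blast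
qed

lemma image_is_return_iff:
  assumes "\<mu> \<in> wasserstein_space p"
  shows "(\<exists>y. \<Phi> \<mu> = return borel y) \<longleftrightarrow> (\<exists>x. \<mu> = return borel x)"
  using return_iff_not_lies_between[OF ultrametric pos assms]
    return_iff_not_lies_between[OF ultrametric pos image_in_wasserstein_space[OF assms]]
    lies_between_image[OF assms] by simp

lemma image_return_exists: "\<exists>y. \<Phi> (return borel x) = return borel y"
  using image_is_return_iff[OF return_in_wasserstein_space] by blast

definition point_map :: "'a \<Rightarrow> 'a" where
  "point_map x = (SOME y. \<Phi> (return borel x) = return borel y)"

lemma image_return: "\<Phi> (return borel x) = return borel (point_map x)"
  unfolding point_map_def using image_return_exists by (rule someI_ex)

lemma dist_point_map: "dist (point_map x) (point_map y) = dist x y"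
proof -
  have "dist (point_map x) (point_map y) powr p = dist x y powr p"
    using transport_cost_image[OF return_in_wasserstein_space return_in_wasserstein_space, of x y]
    by (simp add: image_return transport_cost_return_return)
  then show ?thesis
    by (rule powr_eq_powr_imp_eq[OF zero_le_dist zero_le_dist pos])
qed

lemma bij_point_map: "bij point_map"
proof (rule bijI)
  show "inj point_map"
    by (rule injI) (metis dist_eq_0_iff dist_point_map)
  show "surj point_map"
  proof (rule surjI)
    fix z
    have "return borel z \<in> \<Phi> ` wasserstein_space p"
      using bij_betw_imp_surj_on[OF bij] return_in_wasserstein_space by simp
    then obtain \<mu> where \<mu>: "\<mu> \<in> wasserstein_space p" and \<Phi>\<mu>: "\<Phi> \<mu> = return borel z"
      by auto
    then obtain x where "\<mu> = return borel x"
      using image_is_return_iff[OF \<mu>] by blast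
    then have "point_map x = z"
      using \<Phi>\<mu> image_return[of x] return_borel_inject by simp
    then show "point_map (SOME x. point_map x = z) = z"
      by (rule someI)
  qed
qed

lemma borel_measurable_point_map: "point_map \<in> borel_measurable borel"
proof (rule borel_measurable_continuous_onI)
  show "continuous_on UNIV point_map"
    by (rule uniformly_continuous_imp_continuous)
      (auto simp: uniformly_continuous_on_def dist_point_map)
qed

lemma potential_image:
  assumes \<mu>: "\<mu> \<in> wasserstein_space p"
  shows "potential p (\<Phi> \<mu>) (point_map x) = potential p \<mu> x"
proof -
  have "enn2real (potential p (\<Phi> \<mu>) (point_map x)) = enn2real (potential p \<mu> x)"
    using transport_cost_image[OF \<mu> return_in_wasserstein_space, of x]
    by (simp add: image_return transport_cost_return_right \<mu> image_in_wasserstein_space)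
  then show ?thesis
    using potential_less_top[OF ultrametric pos \<mu>, of x]
      potential_less_top[OF ultrametric pos image_in_wasserstein_space[OF \<mu>], of "point_map x"]
    by (cases "potential p (\<Phi> \<mu>) (point_map x)"; cases "potential p \<mu> x") auto
qed

lemma potential_distr_point_map:
  assumes \<mu>: "\<mu> \<in> wasserstein_space p"
  shows "potential p (distr \<mu> borel point_map) (point_map x) = potential p \<mu> x"
proof -
  have "point_map \<in> measurable \<mu> borel"
    using borel_measurable_point_map by (simp add: measurable_cong_sets[OF wasserstein_spaceD(1)[OF \<mu>] refl])
  moreover have "(\<lambda>y. ennreal (dist y (point_map x) powr p)) \<in> borel_measurable borel"
    by measurable
  ultimately show ?thesis
    unfolding potential_def by (simp add: nn_integral_distr dist_point_map)
qed

lemma distr_point_map_in_wasserstein_space: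
  assumes \<mu>: "\<mu> \<in> wasserstein_space p"
  shows "distr \<mu> borel point_map \<in> wasserstein_space p"
proof -
  have "point_map \<in> measurable \<mu> borel"
    using borel_measurable_point_map by (simp add: measurable_cong_sets[OF wasserstein_spaceD(1)[OF \<mu>] refl])
  then have "prob_space (distr \<mu> borel point_map)"
    by (rule prob_space.prob_space_distr[OF wasserstein_spaceD(2)[OF \<mu>]])
  moreover fix x
  have "potential p (distr \<mu> borel point_map) (point_map x) < \<top>"
    using potential_less_top[OF ultrametric pos \<mu>] by (simp add: potential_distr_point_map[OF \<mu>])
  ultimately show ?thesis
    unfolding wasserstein_space_def potential_def by auto
qed

lemma image_eq_distr_point_map:
  assumes \<mu>: "\<mu> \<in> wasserstein_space p"
  shows "\<Phi> \<mu> = distr \<mu> borel point_map"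
proof (rule potential_eq_imp_eq[OF ultrametric pos image_in_wasserstein_space[OF \<mu>]
      distr_point_map_in_wasserstein_space[OF \<mu>]])
  fix z
  obtain x where "z = point_map x"
    using bij_point_map by (metis bij_pointE)
  then show "potential p (\<Phi> \<mu>) z = potential p (distr \<mu> borel point_map) z"
    by (simp add: potential_image[OF \<mu>] potential_distr_point_map[OF \<mu>])
qed

end

theorem corollary4p8:
  fixes p :: real and \<Phi> :: "('a::polish_space) measure \<Rightarrow> 'a measure"
  assumes "ultrametric TYPE('a)"
    and "0 < p"
    and "bij_betw \<Phi> (wasserstein_space p) (wasserstein_space p)"
    and "\<And>\<mu> \<nu>. \<mu> \<in> wasserstein_space p \<Longrightarrow> \<nu> \<in> wasserstein_space p \<Longrightarrow>
           wasserstein_dist p (\<Phi> \<mu>) (\<Phi> \<nu>) = wasserstein_dist p \<mu> \<nu>"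
  shows "\<exists>\<psi>::'a \<Rightarrow> 'a. bij \<psi> \<and> (\<forall>x y. dist (\<psi> x) (\<psi> y) = dist x y) \<and>
           (\<forall>\<mu>\<in>wasserstein_space p. \<Phi> \<mu> = distr \<mu> borel \<psi>)"
proof -
  interpret wasserstein_isometry p \<Phi>
    using assms by unfold_locales
  show ?thesis
    using bij_point_map dist_point_map image_eq_distr_point_map by blast
qed

end
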